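(* Consider FedAvg with partial device participation as described in the context, and let Assumptions (A1)–(A4) hold. Set $\gamma = \max\{8L/\mu,\, E\}$, $\eta_t = \frac{2}{\mu(\gamma+t)}$, $$B = \sum_{k=1}^N p_k^2\sigma_k^2 + 6L\Gamma + 8(E-1)^2 G^2, \qquad C = \frac{4}{K}E^2G^2 .$$ Let $\mathcal{R}$ be an $L_{\mathcal{R}}$-Lipschitz data reconstruction function and $\mathbf{x}$ the private data. Then for every round $t\ge 1$, $$\mathbb{E}\,\|\mathbf{x} - \mathcal{R}(\mathbf{w}_t)\|^2 \;\le\; 2\,\mathbb{E}\,\|\mathbf{x} - \mathcal{R}(\mathbf{w}^\star)\|^2 + \frac{2L_{\mathcal{R}}^2}{\gamma + t}\left( \frac{4(B+C)}{\mu^2} + (\gamma+1)\,\mathbb{E}\,\|\mathbf{w}_1 - \mathbf{w}^\star\|^2 \right).$$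
   Context: Federated setting: there are $N$ devices with weights $p_k \ge 0$, $\sum_{k=1}^N p_k = 1$. Device $k$ holds a finite dataset $D^k$ and has local objective $\mathcal{L}_k(\mathbf{w}) = \frac{1}{n_k}\sum_{j=1}^{n_k} \ell(\mathbf{w}; (\mathbf{x}^k_j, y^k_j))$; for a sample $\xi$ of $D^k$, $\nabla\mathcal{L}_k(\mathbf{w},\xi)$ denotes the stochastic gradient at that sample. The global objective is $\mathcal{L}(\mathbf{w}) = \sum_{k=1}^N p_k \mathcal{L}_k(\mathbf{w})$, with minimizer $\mathbf{w}^\star$ and minimum value $\mathcal{L}^\ast$; $\mathcal{L}_k^\ast$ is the minimum of $\mathcal{L}_k$, and $\Gamma = \mathcal{L}^\ast - \sum_{k=1}^N p_k \mathcal{L}_k^\ast$. FedAvg with partial participation: fix integers $E\ge 1$ and $1\le K \le N$, and let $\mathcal{I}_E = \{nE : n=1,2,\dots\}$. All devices start at a common $\mathbf{w}_1^k = \mathbf{w}_1$. For $t=1,2,\dots$, each device computes $\mathbf{v}^k_{t+1} = \mathbf{w}^k_t - \eta_t \nabla \mathcal{L}_k(\mathbf{w}^k_t, \xi^k_t)$ with $\xi^k_t$ drawn uniformly from $D^k$. If $t+1\notin\mathcal{I}_E$ then $\mathbf{w}^k_{t+1} = \mathbf{v}^k_{t+1}$. If $t+1\in\mathcal{I}_E$, the server draws a multiset $\mathcal{S}_{t+1}$ of $K$ device indices, independently and with replacement according to the distribution $(p_1,\dots,p_N)$, and sets $\mathbf{w}^k_{t+1} = \frac{1}{K}\sum_{j\in\mathcal{S}_{t+1}}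 \mathbf{v}^j_{t+1}$ (counted with multiplicity) for all $k$. The global model is $\mathbf{w}_t = \sum_{k=1}^N p_k \mathbf{w}^k_t$ (which equals the aggregated model at aggregation steps). Assumptions: (A1) each $\mathcal{L}_k$ is $L$-smooth; (A2) each $\mathcal{L}_k$ is $\mu$-strongly convex with $\mu>0$; (A3) $\mathbb{E}\|\nabla\mathcal{L}_k(\mathbf{w}^k_t,\xi^k_t) - \nabla\mathcal{L}_k(\mathbf{w}^k_t)\|^2 \le \sigma_k^2$ for all $k,t$; (A4) $\mathbb{E}\|\nabla\mathcal{L}_k(\mathbf{w}^k_t,\xi^k_t)\|^2 \le G^2$ for all $k,t$. Reconstruction: private data $\mathbf{x}\in[0,1]^d$; $\mathcal{R}$ maps model parameters to $\mathbb{R}^d$, may be randomized with randomness independent of training, and for every realization satisfies $\|\mathcal{R}(\mathbf{v}) - \mathcal{R}(\mathbf{w})\| \le L_{\mathcal{R}}\|\mathbf{v}-\mathbf{w}\|$ for all $\mathbf{v},\mathbf{w}$. Expectations are over all randomness (stochastic gradients, device sampling, and randomness of $\mathcal{R}$). *)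

theory Defs
  imports "HOL-Analysis.Analysis" "HOL-Probability.Probability"
begin

definition L_smooth :: "real \<Rightarrow> ('a::real_inner \<Rightarrow> real) \<Rightarrow> bool" where
  "L_smooth L f \<longleftrightarrow>
     (\<exists>D. (\<forall>w. GDERIV f w :> D w) \<and> (\<forall>v w. norm (D v - D w) \<le> L * norm (v - w)))"

definition strongly_convex :: "real \<Rightarrow> ('a::real_inner \<Rightarrow> real) \<Rightarrow> bool" where
  "strongly_convex \<mu> f \<longleftrightarrow>
     (\<forall>x y u. 0 \<le> u \<and> u \<le> 1 \<longrightarrow>
        f (u *\<^sub>R x + (1 - u) *\<^sub>R y)
          \<le> u * f x + (1 - u) * f y - \<mu> / 2 * u * (1 - u) * (norm (x - y))\<^sup>2)"

definition local_loss :: "('k \<Rightarrow> nat) \<Rightarrow> ('k \<Rightarrow> nat \<Rightarrow> 'p \<Rightarrow> real) \<Rightarrow> 'k \<Rightarrow> 'p \<Rightarrow> real" where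
  "local_loss n f k w = (\<Sum>j<n k. f k j w) / real (n k)"

definition local_grad :: "('k \<Rightarrow> nat) \<Rightarrow> ('k \<Rightarrow> nat \<Rightarrow> 'p \<Rightarrow> 'p) \<Rightarrow> 'k \<Rightarrow> 'p \<Rightarrow> 'p::real_vector" where
  "local_grad n g k w = (1 / real (n k)) *\<^sub>R (\<Sum>j<n k. g k j w)"

definition global_loss :: "'k::finite pmf \<Rightarrow> ('k \<Rightarrow> nat) \<Rightarrow> ('k \<Rightarrow> nat \<Rightarrow> 'p \<Rightarrow> real) \<Rightarrow> 'p \<Rightarrow> real" where
  "global_loss P n f w = (\<Sum>k\<in>UNIV. pmf P k * local_loss n f k w)"

definition global_model :: "'k::finite pmf \<Rightarrow> ('k \<Rightarrow> 'p) \<Rightarrow> 'p::real_vector" where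
  "global_model P W = (\<Sum>k\<in>UNIV. pmf P k *\<^sub>R W k)"

text \<open>Each device samples its index uniformly and independently; if t+1 is a multiple of E,
  the server samples K indices i.i.d. from P (with replacement) and averages.\<close>
definition fedavg_step ::
  "'k::finite pmf \<Rightarrow> ('k \<Rightarrow> nat) \<Rightarrow> ('k \<Rightarrow> nat \<Rightarrow> 'p \<Rightarrow> 'p) \<Rightarrow> (nat \<Rightarrow> real) \<Rightarrow> nat \<Rightarrow> nat
    \<Rightarrow> nat \<Rightarrow> ('k \<Rightarrow> 'p) \<Rightarrow> ('k \<Rightarrow> 'p::real_vector) pmf" where
  "fedavg_step P n g eta E K t W =
     Pi_pmf UNIV 0 (\<lambda>k. pmf_of_set {..<n k}) \<bind> (\<lambda>\<xi>.
       let V = (\<lambda>k. W k - eta t *\<^sub>R g k (\<xi> k) (W k)) in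
       (if E dvd (t + 1)
        then replicate_pmf K P \<bind> (\<lambda>S. return_pmf (\<lambda>k. (1 / real K) *\<^sub>R (\<Sum>j<K. V (S ! j))))
        else return_pmf V))"

primrec fedavg_aux ::
  "'k::finite pmf \<Rightarrow> ('k \<Rightarrow> nat) \<Rightarrow> ('k \<Rightarrow> nat \<Rightarrow> 'p \<Rightarrow> 'p) \<Rightarrow> (nat \<Rightarrow> real) \<Rightarrow> nat \<Rightarrow> nat
    \<Rightarrow> 'p \<Rightarrow> nat \<Rightarrow> ('k \<Rightarrow> 'p::real_vector) pmf" where
  "fedavg_aux P n g eta E K w1 0 = return_pmf (\<lambda>_. w1)"
| "fedavg_aux P n g eta E K w1 (Suc m) = fedavg_aux P n g eta E K w1 m \<bind> fedavg_step P n g eta E K (Suc m)"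

definition fedavg_round ::
  "'k::finite pmf \<Rightarrow> ('k \<Rightarrow> nat) \<Rightarrow> ('k \<Rightarrow> nat \<Rightarrow> 'p \<Rightarrow> 'p) \<Rightarrow> (nat \<Rightarrow> real) \<Rightarrow> nat \<Rightarrow> nat
    \<Rightarrow> 'p \<Rightarrow> nat \<Rightarrow> ('k \<Rightarrow> 'p::real_vector) pmf" where
  "fedavg_round P n g eta E K w1 t = fedavg_aux P n g eta E K w1 (t - 1)"

end

theory Submission
  imports Defs
begin

text \<open>Following Li et al., "On the convergence of FedAvg on non-IID data", the quantity to control
  is \<Delta>_t, the expected squared distance of the global model to w*. One round satisfies
  \<Delta>_(t+1) \<le> (1 - \<mu> \<eta>_t) \<Delta>_t + \<eta>_t^2 (B + C): strong convexity and smoothness give the contraction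
  and the heterogeneity term 6 L \<Gamma>, the independent stochastic gradients contribute their variances,
  the local models can only diverge during the at most E - 1 steps since the last synchronisation
  (over which \<eta> changes at most by a factor 2), and sampling K devices with replacement adds the
  divergence divided by K. For \<eta>_t = 2 / (\<mu> (\<gamma> + t)) an induction gives
  \<Delta>_t \<le> v / (\<gamma> + t) with v = 4 (B + C) / \<mu>^2 + (\<gamma> + 1) \<Delta>_1. Finally the Lipschitz bound
  |x - R(w)|^2 \<le> 2 |x - R(w*)|^2 + 2 L_R^2 |w - w*|^2 transfers this to the reconstruction error.\<close>

section \<open>Expectations over finitely supported distributions\<close>

lemma expectation_finite_pmf:
  fixes f :: "'a \<Rightarrow> 'b::{banach, second_countable_topology}"
  assumes "finite (set_pmf p)"
  shows "measure_pmf.expectation p f = (\<Sum>x\<in>set_pmf p. pmf p x *\<^sub>R f x)"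
  using assms by (intro integral_measure_pmf) auto

lemma finite_set_pmf_bind:
  "finite (set_pmf p) \<Longrightarrow> (\<And>x. x \<in> set_pmf p \<Longrightarrow> finite (set_pmf (f x))) \<Longrightarrow> finite (set_pmf (p \<bind> f))"
  by auto

lemma finite_set_Pi_pmf:
  "finite A \<Longrightarrow> (\<And>k. k \<in> A \<Longrightarrow> finite (set_pmf (p k))) \<Longrightarrow> finite (set_pmf (Pi_pmf A dflt p))"
  by (subst set_Pi_pmf) (auto intro!: finite_PiE_dflt)

lemma finite_set_replicate_pmf:
  assumes "finite (set_pmf p)"
  shows "finite (set_pmf (replicate_pmf m p))"
proof -
  have "{xs\<in>lists (set_pmf p). length xs = m} = {xs. set xs \<subseteq> set_pmf p \<and> length xs = m}" by auto
  thus ?thesis using assms by (simp add: set_replicate_pmf finite_lists_length_eq)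
qed

lemma expectation_bind_finite:
  fixes h :: "'b \<Rightarrow> 'c::{banach, second_countable_topology}"
  assumes "finite (set_pmf p)" "\<And>x. x \<in> set_pmf p \<Longrightarrow> finite (set_pmf (f x))"
  shows "measure_pmf.expectation (p \<bind> f) h
       = measure_pmf.expectation p (\<lambda>a. measure_pmf.expectation (f a) h)"
  using assms by (subst pmf_expectation_bind[of "set_pmf p"]) (auto simp: expectation_finite_pmf)

lemma expectation_mono_finite:
  fixes f g :: "'a \<Rightarrow> real"
  assumes "finite (set_pmf p)" "\<And>x. x \<in> set_pmf p \<Longrightarrow> f x \<le> g x"
  shows "measure_pmf.expectation p f \<le> measure_pmf.expectation p g"
  using assms by (intro integral_mono_AE) (auto intro: integrable_measure_pmf_finite AE_pmfI)

lemma expectation_add_finite: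
  fixes f g :: "'a \<Rightarrow> 'b::{banach, second_countable_topology}"
  assumes "finite (set_pmf p)"
  shows "measure_pmf.expectation p (\<lambda>x. f x + g x)
       = measure_pmf.expectation p f + measure_pmf.expectation p g"
  using assms by (simp add: expectation_finite_pmf scaleR_add_right sum.distrib)

lemma expectation_diff_finite:
  fixes f g :: "'a \<Rightarrow> 'b::{banach, second_countable_topology}"
  assumes "finite (set_pmf p)"
  shows "measure_pmf.expectation p (\<lambda>x. f x - g x)
       = measure_pmf.expectation p f - measure_pmf.expectation p g"
  using assms by (simp add: expectation_finite_pmf scaleR_diff_right sum_subtractf)

lemma expectation_sum_finite:
  fixes f :: "'i \<Rightarrow> 'a \<Rightarrow> 'b::{banach, second_countable_topology}"
  assumes "finite (set_pmf p)"
  shows "measure_pmf.expectation p (\<lambda>x. \<Sum>i\<in>I. f i x) = (\<Sum>i\<in>I. measure_pmf.expectation p (f i))"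
  using assms by (simp add: expectation_finite_pmf scaleR_sum_right sum.swap[of _ I])

lemma expectation_inner_finite:
  fixes Y :: "'a \<Rightarrow> 'b::{real_inner, banach, second_countable_topology}"
  assumes "finite (set_pmf p)"
  shows "measure_pmf.expectation p (\<lambda>x. inner a (Y x)) = inner a (measure_pmf.expectation p Y)"
  using assms by (simp add: expectation_finite_pmf inner_sum_right)

lemma finite_set_pmf_of_set_lessThan: "0 < (m::nat) \<Longrightarrow> finite (set_pmf (pmf_of_set {..<m}))"
  by (subst set_pmf_of_set) auto

lemma expectation_pmf_of_set_lessThan:
  fixes h :: "nat \<Rightarrow> 'b::{banach, second_countable_topology}"
  assumes "0 < m"
  shows "measure_pmf.expectation (pmf_of_set {..<m}) h = (1 / real m) *\<^sub>R (\<Sum>j<m. h j)"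
proof -
  have "{..<m} \<noteq> {}" using assms by auto
  then show ?thesis
    using finite_set_pmf_of_set_lessThan[OF assms]
    by (subst expectation_finite_pmf) (auto simp: scaleR_sum_right)
qed

lemma expectation_Pi_pmf_component:
  fixes h :: "'a \<Rightarrow> 'b::{banach, second_countable_topology}"
  assumes "finite A" "k \<in> A"
  shows "measure_pmf.expectation (Pi_pmf A dflt p) (\<lambda>\<xi>. h (\<xi> k)) = measure_pmf.expectation (p k) h"
proof -
  have "measure_pmf.expectation (Pi_pmf A dflt p) (\<lambda>\<xi>. h (\<xi> k))
      = measure_pmf.expectation (map_pmf (\<lambda>f. f k) (Pi_pmf A dflt p)) h" by simp
  also have "\<dots> = measure_pmf.expectation (p k) h" using assms by (subst Pi_pmf_component) auto
  finally show ?thesis .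
qed

lemma expectation_norm_sq_add_centered:
  fixes Y :: "'a \<Rightarrow> 'b::{real_inner, banach, second_countable_topology}"
  assumes "finite (set_pmf p)" "measure_pmf.expectation p Y = 0"
  shows "measure_pmf.expectation p (\<lambda>x. (norm (a + Y x))\<^sup>2)
       = (norm a)\<^sup>2 + measure_pmf.expectation p (\<lambda>x. (norm (Y x))\<^sup>2)"
proof -
  have "\<And>x. (norm (a + Y x))\<^sup>2 = ((norm a)\<^sup>2 + (norm (Y x))\<^sup>2) + 2 * inner a (Y x)"
    by (simp add: power2_norm_eq_inner inner_add_left inner_add_right inner_commute)
  hence "measure_pmf.expectation p (\<lambda>x. (norm (a + Y x))\<^sup>2)
     = measure_pmf.expectation p (\<lambda>x. ((norm a)\<^sup>2 + (norm (Y x))\<^sup>2) + 2 * inner a (Y x))" by simp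
  also have "\<dots> = (norm a)\<^sup>2 + measure_pmf.expectation p (\<lambda>x. (norm (Y x))\<^sup>2)
                  + 2 * inner a (measure_pmf.expectation p Y)"
    using assms(1) by (simp add: expectation_add_finite expectation_inner_finite)
  finally show ?thesis using assms(2) by simp
qed

lemma expectation_Pi_pmf_norm_sq_sum_centered:
  fixes Z :: "'k \<Rightarrow> 'a \<Rightarrow> 'b::{real_inner, banach, second_countable_topology}"
  assumes "finite A" "\<And>k. k \<in> A \<Longrightarrow> finite (set_pmf (p k))"
    and "\<And>k. k \<in> A \<Longrightarrow> measure_pmf.expectation (p k) (Z k) = 0"
  shows "measure_pmf.expectation (Pi_pmf A dflt p) (\<lambda>\<xi>. (norm (a + (\<Sum>k\<in>A. Z k (\<xi> k))))\<^sup>2)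
       = (norm a)\<^sup>2 + (\<Sum>k\<in>A. measure_pmf.expectation (p k) (\<lambda>y. (norm (Z k y))\<^sup>2))"
  using assms
proof (induction A arbitrary: a rule: finite_induct)
  case empty
  then show ?case by simp
next
  case (insert x A)
  have fin_A: "finite (set_pmf (Pi_pmf A dflt p))" using insert by (intro finite_set_Pi_pmf) auto
  have fin_x: "finite (set_pmf (p x))" using insert by auto
  have sum_upd: "(\<Sum>k\<in>insert x A. Z k ((f(x:=y)) k)) = Z x y + (\<Sum>k\<in>A. Z k (f k))" for y f
    using insert by (simp add: sum.insert) (intro sum.cong, auto)
  have unchanged: "(\<Sum>k\<in>A. Z k (if k = x then y else f k)) = (\<Sum>k\<in>A. Z k (f k))" for y f
    using insert by (intro sum.cong) auto
  have "measure_pmf.expectation (Pi_pmf (insert x A) dflt p)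
          (\<lambda>\<xi>. (norm (a + (\<Sum>k\<in>insert x A. Z k (\<xi> k))))\<^sup>2)
     = measure_pmf.expectation (p x) (\<lambda>y. measure_pmf.expectation (Pi_pmf A dflt p)
          (\<lambda>f. (norm ((a + Z x y) + (\<Sum>k\<in>A. Z k (f k))))\<^sup>2))"
    using insert fin_A fin_x
    by (subst Pi_pmf_insert') (auto simp: expectation_bind_finite sum_upd unchanged add.assoc)
  also have "\<dots> = measure_pmf.expectation (p x) (\<lambda>y. (norm (a + Z x y))\<^sup>2
          + (\<Sum>k\<in>A. measure_pmf.expectation (p k) (\<lambda>y. (norm (Z k y))\<^sup>2)))"
    using insert by (subst insert.IH) auto
  also have "\<dots> = (norm a)\<^sup>2 + measure_pmf.expectation (p x) (\<lambda>y. (norm (Z x y))\<^sup>2)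
          + (\<Sum>k\<in>A. measure_pmf.expectation (p k) (\<lambda>y. (norm (Z k y))\<^sup>2))"
    using fin_x insert by (simp add: expectation_add_finite expectation_norm_sq_add_centered)
  finally show ?case using insert by (simp add: sum.insert add.assoc)
qed

lemma expectation_replicate_pmf_norm_sq_sum_centered:
  fixes Y :: "'a \<Rightarrow> 'b::{real_inner, banach, second_countable_topology}"
  assumes "finite (set_pmf p)" "measure_pmf.expectation p Y = 0"
  shows "measure_pmf.expectation (replicate_pmf m p) (\<lambda>S. (norm (a + (\<Sum>j<m. Y (S ! j))))\<^sup>2)
       = (norm a)\<^sup>2 + real m * measure_pmf.expectation p (\<lambda>y. (norm (Y y))\<^sup>2)"
proof (induction m arbitrary: a)
  case 0
  then show ?case by simp
next
  case (Suc m)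
  have sum_Cons: "(\<Sum>j<Suc m. Y ((y # xs) ! j)) = Y y + (\<Sum>j<m. Y (xs ! j))" for y xs
    by (subst sum.lessThan_Suc_shift) simp
  have "measure_pmf.expectation (replicate_pmf (Suc m) p) (\<lambda>S. (norm (a + (\<Sum>j<Suc m. Y (S ! j))))\<^sup>2)
    = measure_pmf.expectation p (\<lambda>y. measure_pmf.expectation (replicate_pmf m p)
          (\<lambda>xs. (norm ((a + Y y) + (\<Sum>j<m. Y (xs ! j))))\<^sup>2))"
    using assms finite_set_replicate_pmf[OF assms(1)]
    by (auto simp: expectation_bind_finite sum_Cons add.assoc simp del: sum.lessThan_Suc)
  also have "\<dots> = measure_pmf.expectation p
      (\<lambda>y. (norm (a + Y y))\<^sup>2 + real m * measure_pmf.expectation p (\<lambda>y. (norm (Y y))\<^sup>2))"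
    by (subst Suc.IH) auto
  also have "\<dots> = (norm a)\<^sup>2 + real (Suc m) * measure_pmf.expectation p (\<lambda>y. (norm (Y y))\<^sup>2)"
    using assms by (simp add: expectation_add_finite expectation_norm_sq_add_centered algebra_simps)
  finally show ?case .
qed

section \<open>Smooth strongly convex functions\<close>

lemma power2_norm_add:
  fixes u v :: "'a::real_inner"
  shows "(norm (u + v))\<^sup>2 = (norm u)\<^sup>2 + 2 * inner u v + (norm v)\<^sup>2"
  by (simp add: power2_norm_eq_inner inner_add_left inner_add_right inner_commute)

lemma power2_norm_diff:
  fixes u v :: "'a::real_inner"
  shows "(norm (u - v))\<^sup>2 = (norm u)\<^sup>2 - 2 * inner u v + (norm v)\<^sup>2"
  by (simp add: power2_norm_eq_inner inner_diff_left inner_diff_right inner_commute)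

lemma two_inner_le_power2_norm:
  fixes u v :: "'a::real_inner"
  shows "2 * inner u v \<le> (norm u)\<^sup>2 + (norm v)\<^sup>2"
proof -
  have "0 \<le> (norm (u - v))\<^sup>2" by simp
  then show ?thesis by (simp add: power2_norm_diff)
qed

lemma power2_norm_diff_le_weighted:
  fixes a b :: "'a::real_inner"
  assumes "0 < s"
  shows "(norm (a - b))\<^sup>2 \<le> (1 + 1 / s) * (norm a)\<^sup>2 + (1 + s) * (norm b)\<^sup>2"
proof -
  have "- (2 * inner a b) = 2 * inner ((1 / sqrt s) *\<^sub>R a) (- (sqrt s *\<^sub>R b))"
    using assms by simp
  also have "\<dots> \<le> (norm a)\<^sup>2 / s + s * (norm b)\<^sup>2"
    using two_inner_le_power2_norm[of "(1 / sqrt s) *\<^sub>R a" "- (sqrt s *\<^sub>R b)"] assms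
    by (simp add: power_mult_distrib power_divide)
  finally show ?thesis by (simp add: power2_norm_diff algebra_simps)
qed

lemma weighted_power2_norm_bias_variance:
  fixes a :: "'k \<Rightarrow> 'a::real_inner"
  assumes "finite A" "sum p A = 1"
  defines "m \<equiv> \<Sum>j\<in>A. p j *\<^sub>R a j"
  shows "(\<Sum>k\<in>A. p k * (norm (a k - c))\<^sup>2) = (\<Sum>k\<in>A. p k * (norm (a k - m))\<^sup>2) + (norm (m - c))\<^sup>2"
proof -
  have "(\<Sum>k\<in>A. p k * inner (a k - m) (m - c)) = inner (\<Sum>k\<in>A. p k *\<^sub>R (a k - m)) (m - c)"
    by (simp add: inner_sum_left)
  also have "(\<Sum>k\<in>A. p k *\<^sub>R (a k - m)) = m - (\<Sum>k\<in>A. p k) *\<^sub>R m"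
    by (simp add: scaleR_diff_right sum_subtractf scaleR_sum_left m_def)
  finally have cross: "(\<Sum>k\<in>A. p k * inner (a k - m) (m - c)) = 0"
    using assms by simp
  have "(\<Sum>k\<in>A. p k * (norm (a k - c))\<^sup>2)
      = (\<Sum>k\<in>A. p k * (norm (a k - m))\<^sup>2 + 2 * (p k * inner (a k - m) (m - c)) + p k * (norm (m - c))\<^sup>2)"
  proof (intro sum.cong refl)
    fix k
    have "(norm (a k - c))\<^sup>2 = (norm ((a k - m) + (m - c)))\<^sup>2" by simp
    then show "p k * (norm (a k - c))\<^sup>2
        = p k * (norm (a k - m))\<^sup>2 + 2 * (p k * inner (a k - m) (m - c)) + p k * (norm (m - c))\<^sup>2"
      by (simp only: power2_norm_add distrib_left mult.left_commute)
  qed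
  also have "\<dots> = (\<Sum>k\<in>A. p k * (norm (a k - m))\<^sup>2) + 2 * (\<Sum>k\<in>A. p k * inner (a k - m) (m - c))
                  + (\<Sum>k\<in>A. p k) * (norm (m - c))\<^sup>2"
    by (simp only: sum.distrib sum_distrib_left[symmetric] sum_distrib_right[symmetric])
  finally show ?thesis using cross assms by simp
qed

lemma gderiv_along_line:
  fixes F :: "'a::real_inner \<Rightarrow> real"
  assumes "\<And>w. GDERIV F w :> Df w"
  shows "((\<lambda>u. F (x + u *\<^sub>R d)) has_real_derivative (inner (Df (x + u *\<^sub>R d)) d)) (at u)"
proof -
  have "((\<lambda>u. x + u *\<^sub>R d) has_derivative (\<lambda>h. h *\<^sub>R d)) (at u)"
    by (auto intro!: derivative_eq_intros)
  then have "((\<lambda>u. F (x + u *\<^sub>R d)) has_derivative (\<lambda>h. inner (h *\<^sub>R d) (Df (x + u *\<^sub>R d)))) (at u)"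
    using has_derivative_compose[of _ _ _ _ F] assms unfolding gderiv_def by blast
  moreover have "(\<lambda>h. inner (h *\<^sub>R d) (Df (x + u *\<^sub>R d))) = (*) (inner (Df (x + u *\<^sub>R d)) d)"
    by (auto simp: fun_eq_iff inner_commute)
  ultimately show ?thesis by (simp add: has_field_derivative_def)
qed

lemma gderiv_unique:
  assumes "GDERIV F w :> D1" "GDERIV F w :> D2"
  shows "D1 = D2"
proof -
  have "(\<lambda>h. inner h D1) = (\<lambda>h. inner h D2)"
    using assms unfolding gderiv_def by (rule has_derivative_unique)
  hence "inner (D1 - D2) D1 = inner (D1 - D2) D2" by metis
  hence "inner (D1 - D2) (D1 - D2) = 0" by (simp add: inner_diff_right)
  thus ?thesis by simp
qed

lemma L_smooth_gradient_lipschitz: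
  assumes "L_smooth L F" "\<And>w. GDERIV F w :> Df w"
  shows "norm (Df v - Df w) \<le> L * norm (v - w)"
proof -
  obtain D where D: "\<And>w. GDERIV F w :> D w" "\<And>v w. norm (D v - D w) \<le> L * norm (v - w)"
    using assms(1) unfolding L_smooth_def by blast
  have "D w = Df w" for w using D(1) assms(2) by (rule gderiv_unique)
  thus ?thesis using D(2)[of v w] by simp
qed

lemma strongly_convex_first_order:
  fixes F :: "'a::real_inner \<Rightarrow> real"
  assumes D: "\<And>w. GDERIV F w :> Df w" and sc: "strongly_convex \<mu> F"
  shows "F x + inner (Df x) (y - x) + \<mu> / 2 * (norm (y - x))\<^sup>2 \<le> F y"
proof -
  define d where "d = y - x"
  define \<phi> where "\<phi> = (\<lambda>u. F (x + u *\<^sub>R d))"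
  have "(\<phi> has_real_derivative (inner (Df x) d)) (at 0)"
    using gderiv_along_line[OF D, of x d 0] by (simp add: \<phi>_def)
  hence "((\<lambda>u. (\<phi> u - \<phi> 0) / (u - 0)) \<longlongrightarrow> inner (Df x) d) (at 0)"
    by (simp add: has_field_derivative_iff)
  hence quotient: "((\<lambda>u. (\<phi> u - \<phi> 0) / u) \<longlongrightarrow> inner (Df x) d) (at_right 0)"
    by (auto intro: tendsto_mono[OF at_le])
  have bound: "((\<lambda>u. F y - F x - \<mu> / 2 * (1 - u) * (norm d)\<^sup>2)
      \<longlongrightarrow> F y - F x - \<mu> / 2 * (1 - 0) * (norm d)\<^sup>2) (at_right 0)"
    by (intro tendsto_intros)
  have "eventually (\<lambda>u. u \<in> {0<..<(1::real)}) (at_right 0)"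
    by (rule eventually_at_right_real) simp
  then have "eventually (\<lambda>u. (\<phi> u - \<phi> 0) / u \<le> F y - F x - \<mu> / 2 * (1 - u) * (norm d)\<^sup>2) (at_right 0)"
  proof (rule eventually_mono)
    fix u :: real assume u: "u \<in> {0<..<1}"
    have "F (u *\<^sub>R y + (1 - u) *\<^sub>R x) \<le> u * F y + (1 - u) * F x - \<mu> / 2 * u * (1 - u) * (norm (y - x))\<^sup>2"
      using sc u unfolding strongly_convex_def by auto
    moreover have "u *\<^sub>R y + (1 - u) *\<^sub>R x = x + u *\<^sub>R d"
      by (simp add: d_def algebra_simps)
    ultimately have "\<phi> u - \<phi> 0 \<le> u * (F y - F x - \<mu> / 2 * (1 - u) * (norm d)\<^sup>2)"
      by (simp add: \<phi>_def d_def algebra_simps)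
    thus "(\<phi> u - \<phi> 0) / u \<le> F y - F x - \<mu> / 2 * (1 - u) * (norm d)\<^sup>2"
      using u by (simp add: divide_le_eq mult.commute)
  qed
  then have "inner (Df x) d \<le> F y - F x - \<mu> / 2 * (1 - 0) * (norm d)\<^sup>2"
    by (rule tendsto_le[OF trivial_limit_at_right_real bound quotient])
  thus ?thesis by (simp add: d_def)
qed

lemma lipschitz_gradient_descent:
  fixes F :: "'a::real_inner \<Rightarrow> real"
  assumes D: "\<And>w. GDERIV F w :> Df w" and lip: "\<And>v w. norm (Df v - Df w) \<le> L * norm (v - w)"
  shows "F y \<le> F x + inner (Df x) (y - x) + L / 2 * (norm (y - x))\<^sup>2"
proof -
  define d where "d = y - x"
  define \<psi> where "\<psi> = (\<lambda>u. F (x + u *\<^sub>R d) - u * inner (Df x) d - L / 2 * u\<^sup>2 * (norm d)\<^sup>2)"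
  have "\<psi> 1 \<le> \<psi> 0"
  proof (rule DERIV_nonpos_imp_nonincreasing[of 0 1 \<psi>])
    fix u :: real assume u: "0 \<le> u" "u \<le> 1"
    have "(\<psi> has_real_derivative
        (inner (Df (x + u *\<^sub>R d)) d - inner (Df x) d - L / 2 * (2 * u) * (norm d)\<^sup>2)) (at u)"
      unfolding \<psi>_def
      by (auto intro!: derivative_eq_intros gderiv_along_line[OF D] simp: power2_eq_square)
    moreover have "inner (Df (x + u *\<^sub>R d)) d - inner (Df x) d \<le> L / 2 * (2 * u) * (norm d)\<^sup>2"
    proof -
      have "inner (Df (x + u *\<^sub>R d)) d - inner (Df x) d = inner (Df (x + u *\<^sub>R d) - Df x) d"
        by (simp add: inner_diff_left)
      also have "\<dots> \<le> norm (Df (x + u *\<^sub>R d) - Df x) * norm d"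
        by (rule norm_cauchy_schwarz)
      also have "\<dots> \<le> (L * norm (u *\<^sub>R d)) * norm d"
        using lip[of "x + u *\<^sub>R d" x] by (intro mult_right_mono) auto
      also have "\<dots> = L / 2 * (2 * u) * (norm d)\<^sup>2"
        using u by (simp add: power2_eq_square)
      finally show ?thesis .
    qed
    ultimately show "\<exists>y. (\<psi> has_real_derivative y) (at u) \<and> y \<le> 0" by auto
  qed simp
  thus ?thesis by (simp add: \<psi>_def d_def)
qed

lemma strongly_convex_le_lipschitz_gradient:
  fixes F :: "'a::euclidean_space \<Rightarrow> real"
  assumes D: "\<And>w. GDERIV F w :> Df w" and lip: "\<And>v w. norm (Df v - Df w) \<le> L * norm (v - w)"
    and sc: "strongly_convex \<mu> F"
  shows "\<mu> \<le> L"
proof -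
  obtain b :: 'a where b: "b \<in> Basis" using nonempty_Basis by blast
  have "F 0 + inner (Df 0) (b - 0) + \<mu> / 2 * (norm (b - 0))\<^sup>2 \<le> F b"
    by (rule strongly_convex_first_order[OF D sc])
  moreover have "F b \<le> F 0 + inner (Df 0) (b - 0) + L / 2 * (norm (b - 0))\<^sup>2"
    by (rule lipschitz_gradient_descent[OF D lip])
  ultimately show ?thesis using b by simp
qed

lemma strongly_convex_bdd_below:
  fixes F :: "'a::real_inner \<Rightarrow> real"
  assumes D: "\<And>w. GDERIV F w :> Df w" and sc: "strongly_convex \<mu> F" and mu: "0 < \<mu>"
  shows "bdd_below (range F)"
proof (rule bdd_belowI2)
  fix y
  have "F 0 + inner (Df 0) (y - 0) + \<mu> / 2 * (norm (y - 0))\<^sup>2 \<le> F y"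
    by (rule strongly_convex_first_order[OF D sc])
  moreover have "- (norm (Df 0))\<^sup>2 / (2 * \<mu>) \<le> inner (Df 0) y + \<mu> / 2 * (norm y)\<^sup>2"
  proof -
    have "0 \<le> (norm (Df 0 + \<mu> *\<^sub>R y))\<^sup>2 / (2 * \<mu>)" using mu by simp
    also have "(norm (Df 0 + \<mu> *\<^sub>R y))\<^sup>2 = (norm (Df 0))\<^sup>2 + 2 * \<mu> * inner (Df 0) y + \<mu>\<^sup>2 * (norm y)\<^sup>2"
      by (simp add: power2_norm_add power_mult_distrib)
    also have "\<dots> / (2 * \<mu>) = (norm (Df 0))\<^sup>2 / (2 * \<mu>) + (inner (Df 0) y + \<mu> / 2 * (norm y)\<^sup>2)"
      using mu by (simp add: field_simps power2_eq_square)
    finally show ?thesis by simp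
  qed
  ultimately show "F 0 - (norm (Df 0))\<^sup>2 / (2 * \<mu>) \<le> F y" by simp
qed

lemma power2_norm_gradient_le_suboptimality:
  fixes F :: "'a::euclidean_space \<Rightarrow> real"
  assumes D: "\<And>w. GDERIV F w :> Df w" and lip: "\<And>v w. norm (Df v - Df w) \<le> L * norm (v - w)"
    and sc: "strongly_convex \<mu> F" and mu: "0 < \<mu>"
  shows "(norm (Df x))\<^sup>2 \<le> 2 * L * (F x - Inf (range F))"
proof -
  have L: "0 < L" using strongly_convex_le_lipschitz_gradient[OF D lip sc] mu by simp
  define y where "y = x - (1 / L) *\<^sub>R Df x"
  have "Inf (range F) \<le> F y"
    using strongly_convex_bdd_below[OF D sc mu] by (simp add: cInf_lower)
  also have "F y \<le> F x + inner (Df x) (y - x) + L / 2 * (norm (y - x))\<^sup>2"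
    by (rule lipschitz_gradient_descent[OF D lip])
  also have "\<dots> = F x - (norm (Df x))\<^sup>2 / (2 * L)"
    using L by (simp add: y_def power_mult_distrib power2_norm_eq_inner field_simps power2_eq_square)
       (metis power2_eq_square power2_norm_eq_inner)
  finally show ?thesis using L by (simp add: field_simps)
qed

lemma gderiv_local_loss:
  assumes "\<forall>k j w. j < n k \<longrightarrow> GDERIV (f k j) w :> g k j w"
  shows "GDERIV (local_loss n f k) w :> local_grad n g k w"
proof -
  have "FDERIV (\<lambda>w. \<Sum>j<n k. f k j w) w :> (\<lambda>h. \<Sum>j<n k. inner h (g k j w))"
    using assms unfolding gderiv_def by (intro has_derivative_sum) auto
  hence "FDERIV (\<lambda>w. (1 / real (n k)) * (\<Sum>j<n k. f k j w)) w
      :> (\<lambda>h. (1 / real (n k)) * (\<Sum>j<n k. inner h (g k j w)))"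
    by (rule has_derivative_mult_right)
  moreover have "(\<lambda>w. (1 / real (n k)) * (\<Sum>j<n k. f k j w)) = local_loss n f k"
    by (auto simp: local_loss_def fun_eq_iff)
  moreover have "(\<lambda>h. (1 / real (n k)) * (\<Sum>j<n k. inner h (g k j w))) = (\<lambda>h. inner h (local_grad n g k w))"
    by (auto simp: local_grad_def fun_eq_iff inner_sum_right)
  ultimately show ?thesis unfolding gderiv_def by simp
qed

section \<open>One step of averaged gradient descent\<close>

lemma convex_gradient_step_gap:
  fixes F :: "'a::real_inner \<Rightarrow> real"
  assumes convex: "F x + inner (Df x) (y - x) \<le> F y"
    and grad: "(norm (Df x))\<^sup>2 \<le> 2 * L * (F x - Fmin)" and "0 \<le> \<eta>"
  shows "0 \<le> (norm (y - x))\<^sup>2 + 2 * \<eta> * (F y - F x) + 2 * L * \<eta>\<^sup>2 * (F x - Fmin)"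
proof -
  have "0 \<le> (norm ((y - x) + \<eta> *\<^sub>R Df x))\<^sup>2" by simp
  also have "\<dots> = (norm (y - x))\<^sup>2 + 2 * \<eta> * inner (Df x) (y - x) + \<eta>\<^sup>2 * (norm (Df x))\<^sup>2"
    by (simp add: power2_norm_add power_mult_distrib inner_commute)
  also have "\<dots> \<le> (norm (y - x))\<^sup>2 + 2 * \<eta> * (F y - F x) + \<eta>\<^sup>2 * (2 * L * (F x - Fmin))"
    using assms by (intro add_mono mult_left_mono order_refl) auto
  finally show ?thesis by (simp add: algebra_simps)
qed

text \<open>The step size condition 4 L \<eta> \<le> 1 makes every coefficient in the decomposition of the
  proof nonnegative.\<close>

lemma weighted_optimality_gap_bound:
  fixes p :: "'k::finite \<Rightarrow> real" and F :: "'k \<Rightarrow> 'a::real_inner \<Rightarrow> real" and W :: "'k \<Rightarrow> 'a"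
  assumes p_nonneg: "\<And>k. 0 \<le> p k" and p_sum: "sum p UNIV = 1"
    and convex: "\<And>k x y. F k x + inner (Df k x) (y - x) \<le> F k y"
    and grad: "\<And>k x. (norm (Df k x))\<^sup>2 \<le> 2 * L * (F k x - Fmin k)"
    and opt: "\<And>w. (\<Sum>k\<in>UNIV. p k * F k ws) \<le> (\<Sum>k\<in>UNIV. p k * F k w)"
    and heterogeneity: "(\<Sum>k\<in>UNIV. p k * Fmin k) \<le> (\<Sum>k\<in>UNIV. p k * F k ws)"
    and "0 \<le> L" "0 < \<eta>" "4 * L * \<eta> \<le> 1"
  defines "wb \<equiv> \<Sum>k\<in>UNIV. p k *\<^sub>R W k"
  shows "4 * L * \<eta>\<^sup>2 * (\<Sum>k\<in>UNIV. p k * (F k (W k) - Fmin k))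
           - 2 * \<eta> * (\<Sum>k\<in>UNIV. p k * (F k (W k) - F k ws))
         \<le> 6 * L * \<eta>\<^sup>2 * (\<Sum>k\<in>UNIV. p k * (F k ws - Fmin k)) + (\<Sum>k\<in>UNIV. p k * (norm (W k - wb))\<^sup>2)"
proof -
  define FW where "FW = (\<Sum>k\<in>UNIV. p k * F k (W k))"
  define Fws where "Fws = (\<Sum>k\<in>UNIV. p k * F k ws)"
  define FS where "FS = (\<Sum>k\<in>UNIV. p k * Fmin k)"
  define Dv where "Dv = (\<Sum>k\<in>UNIV. p k * (norm (W k - wb))\<^sup>2)"
  define Fwb where "Fwb = (\<Sum>k\<in>UNIV. p k * F k wb)"
  have "0 \<le> (norm (W k - wb))\<^sup>2 + 2 * \<eta> * (F k (W k) - F k wb) + 2 * L * \<eta>\<^sup>2 * (F k wb - Fmin k)"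
    for k using convex grad \<open>0 < \<eta>\<close> by (intro convex_gradient_step_gap) auto
  then have "0 \<le> (\<Sum>k\<in>UNIV. p k * ((norm (W k - wb))\<^sup>2 + 2 * \<eta> * (F k (W k) - F k wb)
                                + 2 * L * \<eta>\<^sup>2 * (F k wb - Fmin k)))"
    using p_nonneg by (intro sum_nonneg mult_nonneg_nonneg) auto
  then have gap: "0 \<le> Dv + 2 * \<eta> * (FW - Fwb) + 2 * L * \<eta>\<^sup>2 * (Fwb - FS)"
    by (simp add: Dv_def FW_def Fwb_def FS_def sum.distrib sum_distrib_left sum_subtractf
        algebra_simps)
  have "0 \<le> Fwb - Fws" using opt[of wb] by (simp add: Fwb_def Fws_def)
  moreover have "0 \<le> Fws - FS" using heterogeneity by (simp add: Fws_def FS_def)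
  moreover have "0 \<le> Dv" unfolding Dv_def using p_nonneg by (intro sum_nonneg) auto
  moreover have "0 \<le> 1 - 2 * L * \<eta>" "0 \<le> 1 - L * \<eta>" using assms by (simp_all add: algebra_simps)
  ultimately have "0 \<le> (1 - 2 * L * \<eta>) * (Dv + 2 * \<eta> * (FW - Fwb) + 2 * L * \<eta>\<^sup>2 * (Fwb - FS))"
    and "0 \<le> 4 * L\<^sup>2 * \<eta>^3 * (Fws - FS)" and "0 \<le> 2 * L * \<eta> * Dv"
    and "0 \<le> 2 * \<eta> * (1 - 2 * L * \<eta>) * (1 - L * \<eta>) * (Fwb - Fws)"
    using gap assms by simp_all
  then have "0 \<le> (1 - 2 * L * \<eta>) * (Dv + 2 * \<eta> * (FW - Fwb) + 2 * L * \<eta>\<^sup>2 * (Fwb - FS))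
      + 4 * L\<^sup>2 * \<eta>^3 * (Fws - FS) + 2 * L * \<eta> * Dv
      + 2 * \<eta> * (1 - 2 * L * \<eta>) * (1 - L * \<eta>) * (Fwb - Fws)"
    by linarith
  also have "\<dots> = 6 * L * \<eta>\<^sup>2 * (Fws - FS) + Dv - (4 * L * \<eta>\<^sup>2 * (FW - FS) - 2 * \<eta> * (FW - Fws))"
    by (simp add: algebra_simps power2_eq_square power3_eq_cube)
  finally show ?thesis
    by (simp add: FW_def Fws_def FS_def Dv_def sum_subtractf right_diff_distrib)
qed

lemma weighted_gradient_correlation_bound:
  fixes p :: "'k::finite \<Rightarrow> real" and F :: "'k \<Rightarrow> 'a::real_inner \<Rightarrow> real" and W :: "'k \<Rightarrow> 'a"
  assumes p_nonneg: "\<And>k. 0 \<le> p k"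
    and sc: "\<And>k x y. F k x + inner (Df k x) (y - x) + \<mu> / 2 * (norm (y - x))\<^sup>2 \<le> F k y"
    and "0 \<le> \<eta>"
  defines "wb \<equiv> \<Sum>k\<in>UNIV. p k *\<^sub>R W k"
  shows "- 2 * \<eta> * inner (wb - ws) (\<Sum>k\<in>UNIV. p k *\<^sub>R Df k (W k))
    \<le> (\<Sum>k\<in>UNIV. p k * (norm (W k - wb))\<^sup>2) + \<eta>\<^sup>2 * (\<Sum>k\<in>UNIV. p k * (norm (Df k (W k)))\<^sup>2)
      + 2 * \<eta> * (\<Sum>k\<in>UNIV. p k * (F k ws - F k (W k)))
      - \<mu> * \<eta> * (\<Sum>k\<in>UNIV. p k * (norm (W k - ws))\<^sup>2)"
proof -
  have pointwise: "- 2 * \<eta> * inner (wb - ws) (Df k (W k))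
      \<le> (norm (W k - wb))\<^sup>2 + \<eta>\<^sup>2 * (norm (Df k (W k)))\<^sup>2
        + 2 * \<eta> * (F k ws - F k (W k)) - \<mu> * \<eta> * (norm (W k - ws))\<^sup>2" for k
  proof -
    have "2 * inner (W k - wb) (\<eta> *\<^sub>R Df k (W k)) \<le> (norm (W k - wb))\<^sup>2 + (norm (\<eta> *\<^sub>R Df k (W k)))\<^sup>2"
      by (rule two_inner_le_power2_norm)
    moreover have "\<eta> * (F k (W k) + inner (Df k (W k)) (ws - W k) + \<mu> / 2 * (norm (ws - W k))\<^sup>2)
        \<le> \<eta> * F k ws"
      using sc \<open>0 \<le> \<eta>\<close> by (intro mult_left_mono) auto
    moreover have "wb - ws = (wb - W k) + (W k - ws)" by simp
    ultimately show ?thesis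
      by (simp add: inner_add_left inner_diff_left inner_diff_right inner_commute norm_minus_commute
          power_mult_distrib algebra_simps)
  qed
  have "- 2 * \<eta> * inner (wb - ws) (\<Sum>k\<in>UNIV. p k *\<^sub>R Df k (W k))
      = (\<Sum>k\<in>UNIV. p k * (- 2 * \<eta> * inner (wb - ws) (Df k (W k))))"
    by (simp add: inner_sum_right sum_distrib_left algebra_simps)
  also have "\<dots> \<le> (\<Sum>k\<in>UNIV. p k * ((norm (W k - wb))\<^sup>2 + \<eta>\<^sup>2 * (norm (Df k (W k)))\<^sup>2
        + 2 * \<eta> * (F k ws - F k (W k)) - \<mu> * \<eta> * (norm (W k - ws))\<^sup>2))"
    using pointwise p_nonneg by (intro sum_mono mult_left_mono) auto
  finally show ?thesis
    by (simp add: distrib_left right_diff_distrib sum.distrib sum_subtractf sum_distrib_left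
        mult.left_commute)
qed

text \<open>Lemma 1 of Li et al. (ICLR 2020): the gradients are taken at the diverged local models W k,
  which costs the divergence term.\<close>

lemma averaged_gradient_step_contraction:
  fixes p :: "'k::finite \<Rightarrow> real" and F :: "'k \<Rightarrow> 'a::real_inner \<Rightarrow> real" and W :: "'k \<Rightarrow> 'a"
  assumes p_nonneg: "\<And>k. 0 \<le> p k" and p_sum: "sum p UNIV = 1"
    and sc: "\<And>k x y. F k x + inner (Df k x) (y - x) + \<mu> / 2 * (norm (y - x))\<^sup>2 \<le> F k y"
    and grad: "\<And>k x. (norm (Df k x))\<^sup>2 \<le> 2 * L * (F k x - Fmin k)"
    and opt: "\<And>w. (\<Sum>k\<in>UNIV. p k * F k ws) \<le> (\<Sum>k\<in>UNIV. p k * F k w)"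
    and heterogeneity: "(\<Sum>k\<in>UNIV. p k * Fmin k) \<le> (\<Sum>k\<in>UNIV. p k * F k ws)"
    and "0 \<le> \<mu>" "0 \<le> L" "0 < \<eta>" "4 * L * \<eta> \<le> 1"
  defines "wb \<equiv> \<Sum>k\<in>UNIV. p k *\<^sub>R W k"
  shows "(norm (wb - \<eta> *\<^sub>R (\<Sum>k\<in>UNIV. p k *\<^sub>R Df k (W k)) - ws))\<^sup>2
     \<le> (1 - \<mu> * \<eta>) * (norm (wb - ws))\<^sup>2
       + 6 * L * \<eta>\<^sup>2 * ((\<Sum>k\<in>UNIV. p k * F k ws) - (\<Sum>k\<in>UNIV. p k * Fmin k))
       + 2 * (\<Sum>k\<in>UNIV. p k * (norm (W k - wb))\<^sup>2)"
proof -
  define Gb where "Gb = (\<Sum>k\<in>UNIV. p k *\<^sub>R Df k (W k))"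
  define Gsq where "Gsq = (\<Sum>k\<in>UNIV. p k * (norm (Df k (W k)))\<^sup>2)"
  define FW where "FW = (\<Sum>k\<in>UNIV. p k * F k (W k))"
  define Fws where "Fws = (\<Sum>k\<in>UNIV. p k * F k ws)"
  define FS where "FS = (\<Sum>k\<in>UNIV. p k * Fmin k)"
  define Dv where "Dv = (\<Sum>k\<in>UNIV. p k * (norm (W k - wb))\<^sup>2)"
  define Msq where "Msq = (\<Sum>k\<in>UNIV. p k * (norm (W k - ws))\<^sup>2)"
  have convex: "F k x + inner (Df k x) (y - x) \<le> F k y" for k x y
  proof -
    have "0 \<le> \<mu> / 2 * (norm (y - x))\<^sup>2" using \<open>0 \<le> \<mu>\<close> by simp
    then show ?thesis using sc[of k x y] by linarith
  qed
  have expand: "(norm (wb - \<eta> *\<^sub>R Gb - ws))\<^sup>2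
      = (norm (wb - ws))\<^sup>2 - 2 * \<eta> * inner (wb - ws) Gb + \<eta>\<^sup>2 * (norm Gb)\<^sup>2"
    using power2_norm_diff[of "wb - ws" "\<eta> *\<^sub>R Gb"] by (simp add: power_mult_distrib algebra_simps)
  have "(norm Gb)\<^sup>2 \<le> Gsq" and A0: "(norm (wb - ws))\<^sup>2 \<le> Msq"
    using weighted_power2_norm_bias_variance[of UNIV p "\<lambda>k. Df k (W k)" 0]
      weighted_power2_norm_bias_variance[of UNIV p W ws] p_sum p_nonneg
    by (simp_all add: Gb_def Gsq_def Msq_def wb_def sum_nonneg)
  then have Gb: "\<eta>\<^sup>2 * (norm Gb)\<^sup>2 \<le> \<eta>\<^sup>2 * Gsq" by (simp add: mult_left_mono)
  have "Gsq \<le> (\<Sum>k\<in>UNIV. p k * (2 * L * (F k (W k) - Fmin k)))"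
    unfolding Gsq_def using p_nonneg grad by (intro sum_mono mult_left_mono) auto
  also have "\<dots> = 2 * L * (FW - FS)"
    by (simp add: FW_def FS_def sum_distrib_left sum_subtractf algebra_simps)
  finally have Gsq: "\<eta>\<^sup>2 * Gsq \<le> \<eta>\<^sup>2 * (2 * L * (FW - FS))"
    by (simp add: mult_left_mono)
  have "- 2 * \<eta> * inner (wb - ws) Gb
      \<le> Dv + \<eta>\<^sup>2 * Gsq + 2 * \<eta> * (\<Sum>k\<in>UNIV. p k * (F k ws - F k (W k))) - \<mu> * \<eta> * Msq"
    unfolding Gb_def Gsq_def Dv_def Msq_def wb_def
    using \<open>0 < \<eta>\<close> by (intro weighted_gradient_correlation_bound[OF p_nonneg sc]) simp
  then have corr: "- 2 * \<eta> * inner (wb - ws) Gb \<le> Dv + \<eta>\<^sup>2 * Gsq + 2 * \<eta> * (Fws - FW) - \<mu> * \<eta> * Msq"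
    by (simp add: Fws_def FW_def sum_subtractf right_diff_distrib)
  have gap: "4 * L * \<eta>\<^sup>2 * (FW - FS) - 2 * \<eta> * (FW - Fws) \<le> 6 * L * \<eta>\<^sup>2 * (Fws - FS) + Dv"
    using weighted_optimality_gap_bound[OF p_nonneg p_sum convex grad opt heterogeneity] assms
    by (simp add: FW_def FS_def Fws_def Dv_def wb_def sum_subtractf right_diff_distrib)
  have "\<mu> * \<eta> * (norm (wb - ws))\<^sup>2 \<le> \<mu> * \<eta> * Msq"
    using A0 \<open>0 \<le> \<mu>\<close> \<open>0 < \<eta>\<close> by (simp add: mult_left_mono)
  then have "(norm (wb - \<eta> *\<^sub>R Gb - ws))\<^sup>2 \<le> (1 - \<mu> * \<eta>) * (norm (wb - ws))\<^sup>2
      + 6 * L * \<eta>\<^sup>2 * (Fws - FS) + 2 * Dv"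
    using expand Gb Gsq corr gap by (simp add: algebra_simps)
  then show ?thesis by (simp add: Gb_def Fws_def FS_def Dv_def)
qed

section \<open>Step sizes of order 1/t\<close>

lemma inverse_linear_stepsize:
  fixes \<gamma> \<mu> L :: real and E :: nat
  assumes "0 < \<mu>" "1 \<le> \<gamma>" "8 * L / \<mu> \<le> \<gamma>" "real E \<le> \<gamma>"
  defines "eta \<equiv> \<lambda>s::nat. 2 / (\<mu> * (\<gamma> + real s))"
  shows "0 < eta s" and "s \<le> t \<Longrightarrow> eta t \<le> eta s" and "4 * L * eta s \<le> 1"
    and "s \<le> t \<Longrightarrow> t < s + E \<Longrightarrow> eta s \<le> 2 * eta t"
proof -
  show "0 < eta s" using assms by (simp add: eta_def)
  show "s \<le> t \<Longrightarrow> eta t \<le> eta s"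
    using assms by (auto simp: eta_def intro!: divide_left_mono mult_left_mono)
  have "8 * L \<le> \<mu> * \<gamma>" using assms by (simp add: field_simps)
  also have "\<dots> \<le> \<mu> * (\<gamma> + real s)" using assms by simp
  finally have "8 * L \<le> \<mu> * (\<gamma> + real s)" .
  moreover have "0 < \<mu> * (\<gamma> + real s)" using assms by simp
  ultimately show "4 * L * eta s \<le> 1" by (simp add: eta_def field_simps)
  assume "s \<le> t" "t < s + E"
  then have "\<mu> * (\<gamma> + real t) \<le> 2 * (\<mu> * (\<gamma> + real s))"
    using assms mult_left_mono[of "\<gamma> + real t" "2 * (\<gamma> + real s)" \<mu>] by simp
  moreover have "0 < \<mu> * (\<gamma> + real s)" "0 < \<mu> * (\<gamma> + real t)" using assms by simp_all
  ultimately show "eta s \<le> 2 * eta t" by (simp add: eta_def field_simps)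
qed

text \<open>The induction of Li et al.: with \<eta>_t = 2 / (\<mu> (\<gamma> + t)) the contraction factor 1 - 2/(\<gamma> + t)
  exactly absorbs the noise term as long as v \<ge> 4 \<beta> / \<mu>^2.\<close>

lemma recursion_bound_inverse_linear:
  fixes \<Delta> :: "nat \<Rightarrow> real"
  assumes "0 < \<mu>" "1 \<le> \<gamma>" "0 \<le> v" "4 * \<beta> / \<mu>\<^sup>2 \<le> v" "\<Delta> 1 \<le> v / (\<gamma> + 1)"
    and recursion: "\<And>t. 1 \<le> t \<Longrightarrow> \<Delta> (Suc t) \<le> (1 - \<mu> * (2 / (\<mu> * (\<gamma> + real t)))) * \<Delta> t
                  + (2 / (\<mu> * (\<gamma> + real t)))\<^sup>2 * \<beta>"
  shows "1 \<le> t \<Longrightarrow> \<Delta> t \<le> v / (\<gamma> + real t)"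
proof (induction t rule: dec_induct)
  case base
  then show ?case using assms by simp
next
  case (step t)
  define u where "u = \<gamma> + real t"
  have "2 \<le> u" using assms step by (simp add: u_def)
  have "0 \<le> 1 - \<mu> * (2 / (\<mu> * u))" using assms \<open>2 \<le> u\<close> by (simp add: field_simps)
  have "\<Delta> (Suc t) \<le> (1 - \<mu> * (2 / (\<mu> * u))) * \<Delta> t + (2 / (\<mu> * u))\<^sup>2 * \<beta>"
    using recursion[OF step(1)] by (simp add: u_def)
  also have "\<dots> \<le> (1 - \<mu> * (2 / (\<mu> * u))) * (v / u) + (4 * \<beta> / \<mu>\<^sup>2) / u\<^sup>2"
    using step(3) \<open>0 \<le> 1 - \<mu> * (2 / (\<mu> * u))\<close>
    by (intro add_mono mult_left_mono) (auto simp: u_def power2_eq_square field_simps)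
  also have "\<dots> \<le> (1 - \<mu> * (2 / (\<mu> * u))) * (v / u) + v / u\<^sup>2"
    using assms by (intro add_mono divide_right_mono) auto
  also have "\<dots> = (u - 1) * v / u\<^sup>2"
    using assms \<open>2 \<le> u\<close> by (simp add: field_simps power2_eq_square)
  also have "\<dots> \<le> v / (u + 1)"
  proof -
    have "(u - 1) * v * (u + 1) \<le> v * u\<^sup>2"
      using \<open>0 \<le> v\<close> by (simp add: power2_eq_square algebra_simps)
    then show ?thesis using \<open>2 \<le> u\<close> by (simp add: field_simps)
  qed
  finally show ?case by (simp add: u_def algebra_simps)
qed

section \<open>Lipschitz reconstruction\<close>

lemma power2_norm_lipschitz_le:
  fixes R :: "'p::real_normed_vector \<Rightarrow> 'b::real_normed_vector"
  assumes "C-lipschitz_on UNIV R"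
  shows "(norm (x - R w))\<^sup>2 \<le> 2 * (norm (x - R w0))\<^sup>2 + 2 * C\<^sup>2 * (norm (w - w0))\<^sup>2"
proof -
  have "norm (x - R w) \<le> norm (x - R w0) + norm (R w0 - R w)"
    using norm_triangle_ineq[of "x - R w0" "R w0 - R w"] by simp
  also have "norm (R w0 - R w) \<le> C * norm (w - w0)"
    using lipschitz_onD[OF assms, of w0 w] by (simp add: dist_norm norm_minus_commute)
  finally have "(norm (x - R w))\<^sup>2 \<le> (norm (x - R w0) + C * norm (w - w0))\<^sup>2"
    by (simp add: power_mono)
  also have "\<dots> \<le> 2 * (norm (x - R w0))\<^sup>2 + 2 * (C * norm (w - w0))\<^sup>2"
    using two_inner_le_power2_norm[of "norm (x - R w0)" "C * norm (w - w0)"]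
    by (simp add: power2_sum)
  finally show ?thesis by (simp add: power_mult_distrib)
qed

lemma nn_integral_lipschitz_reconstruction_le:
  fixes R :: "'r \<Rightarrow> 'p::real_normed_vector \<Rightarrow> 'b::euclidean_space"
  assumes "prob_space Q" "finite (set_pmf M)"
    and "(\<lambda>r. R r w0) \<in> borel_measurable Q" and "\<forall>r. C-lipschitz_on UNIV (R r)"
  shows "(\<integral>\<^sup>+ W. (\<integral>\<^sup>+ r. ennreal ((norm (x - R r (h W)))\<^sup>2) \<partial>Q) \<partial>measure_pmf M)
    \<le> 2 * (\<integral>\<^sup>+ r. ennreal ((norm (x - R r w0))\<^sup>2) \<partial>Q)
      + ennreal (2 * C\<^sup>2 * measure_pmf.expectation M (\<lambda>W. (norm (h W - w0))\<^sup>2))"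
proof -
  interpret Q: prob_space Q by (rule assms(1))
  define I where "I = (\<integral>\<^sup>+ r. ennreal ((norm (x - R r w0))\<^sup>2) \<partial>Q)"
  have measurable: "(\<lambda>r. ennreal ((norm (x - R r w0))\<^sup>2)) \<in> borel_measurable Q"
    "(\<lambda>r. ennreal (2 * (norm (x - R r w0))\<^sup>2)) \<in> borel_measurable Q"
    using assms(3) by measurable
  have "(\<integral>\<^sup>+ r. ennreal ((norm (x - R r w))\<^sup>2) \<partial>Q) \<le> 2 * I + ennreal (2 * C\<^sup>2 * (norm (w - w0))\<^sup>2)"
    for w
  proof -
    have "(\<integral>\<^sup>+ r. ennreal ((norm (x - R r w))\<^sup>2) \<partial>Q)
       \<le> (\<integral>\<^sup>+ r. ennreal (2 * (norm (x - R r w0))\<^sup>2) + ennreal (2 * C\<^sup>2 * (norm (w - w0))\<^sup>2) \<partial>Q)"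
      using power2_norm_lipschitz_le[OF assms(4)[rule_format]]
      by (intro nn_integral_mono) (simp add: ennreal_plus[symmetric] del: ennreal_plus)
    also have "\<dots> = (\<integral>\<^sup>+ r. ennreal (2 * (norm (x - R r w0))\<^sup>2) \<partial>Q)
        + ennreal (2 * C\<^sup>2 * (norm (w - w0))\<^sup>2)"
      using measurable by (subst nn_integral_add) (auto simp: Q.emeasure_space_1)
    also have "(\<integral>\<^sup>+ r. ennreal (2 * (norm (x - R r w0))\<^sup>2) \<partial>Q) = 2 * I"
      unfolding I_def using measurable
      by (subst nn_integral_cmult[symmetric]) (auto simp: ennreal_mult)
    finally show ?thesis .
  qed
  then have "(\<integral>\<^sup>+ W. (\<integral>\<^sup>+ r. ennreal ((norm (x - R r (h W)))\<^sup>2) \<partial>Q) \<partial>measure_pmf M)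
     \<le> (\<integral>\<^sup>+ W. 2 * I + ennreal (2 * C\<^sup>2 * (norm (h W - w0))\<^sup>2) \<partial>measure_pmf M)"
    by (intro nn_integral_mono) auto
  also have "\<dots> = 2 * I + (\<integral>\<^sup>+ W. ennreal (2 * C\<^sup>2 * (norm (h W - w0))\<^sup>2) \<partial>measure_pmf M)"
    by (subst nn_integral_add) (auto simp: measure_pmf.emeasure_space_1)
  also have "(\<integral>\<^sup>+ W. ennreal (2 * C\<^sup>2 * (norm (h W - w0))\<^sup>2) \<partial>measure_pmf M)
      = ennreal (2 * C\<^sup>2 * measure_pmf.expectation M (\<lambda>W. (norm (h W - w0))\<^sup>2))"
    using assms(2) by (subst nn_integral_eq_integral) (auto intro: integrable_measure_pmf_finite)
  finally show ?thesis by (simp add: I_def)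
qed

section \<open>One round of FedAvg\<close>

abbreviation device_samples :: "('k::finite \<Rightarrow> nat) \<Rightarrow> ('k \<Rightarrow> nat) pmf" where
  "device_samples n \<equiv> Pi_pmf UNIV 0 (\<lambda>k. pmf_of_set {..<n k})"

definition local_sgd_update ::
  "('k \<Rightarrow> nat \<Rightarrow> 'p \<Rightarrow> 'p) \<Rightarrow> real \<Rightarrow> ('k \<Rightarrow> 'p) \<Rightarrow> ('k \<Rightarrow> nat) \<Rightarrow> 'k \<Rightarrow> 'p::real_vector" where
  "local_sgd_update g \<eta> W \<xi> = (\<lambda>k. W k - \<eta> *\<^sub>R g k (\<xi> k) (W k))"

definition model_divergence :: "'k::finite pmf \<Rightarrow> ('k \<Rightarrow> 'p::real_inner) \<Rightarrow> real" where
  "model_divergence P W = (\<Sum>k\<in>UNIV. pmf P k * (norm (W k - global_model P W))\<^sup>2)"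

lemma sum_pmf_UNIV: "(\<Sum>k\<in>UNIV. pmf (P::'k::finite pmf) k) = 1"
  by (rule sum_pmf_eq_1) auto

lemma global_model_const: "global_model P (\<lambda>_. c) = c"
  by (simp add: global_model_def scaleR_sum_left[symmetric] sum_pmf_UNIV)

lemma model_divergence_const: "model_divergence P (\<lambda>_. c) = 0"
  by (simp add: model_divergence_def global_model_const)

lemma model_divergence_le: "model_divergence P W \<le> (\<Sum>k\<in>UNIV. pmf P k * (norm (W k - c))\<^sup>2)"
  using weighted_power2_norm_bias_variance[of UNIV "pmf P" W c] sum_pmf_UNIV[of P]
  by (simp add: model_divergence_def global_model_def)

lemma finite_set_device_samples: "\<forall>k. 0 < n k \<Longrightarrow> finite (set_pmf (device_samples n))"
  by (intro finite_set_Pi_pmf) (auto intro: finite_set_pmf_of_set_lessThan)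

lemma expectation_device_samples_sum:
  fixes h :: "'k::finite \<Rightarrow> nat \<Rightarrow> real"
  assumes "\<forall>k. 0 < n k"
  shows "measure_pmf.expectation (device_samples n) (\<lambda>\<xi>. \<Sum>k\<in>UNIV. h k (\<xi> k))
       = (\<Sum>k\<in>UNIV. measure_pmf.expectation (pmf_of_set {..<n k}) (h k))"
  using assms finite_set_device_samples[OF assms]
  by (simp add: expectation_sum_finite expectation_Pi_pmf_component)

lemma expectation_sample_gradient:
  fixes g :: "'k \<Rightarrow> nat \<Rightarrow> 'p \<Rightarrow> 'p::euclidean_space"
  assumes "0 < n k"
  shows "measure_pmf.expectation (pmf_of_set {..<n k}) (\<lambda>j. g k j w) = local_grad n g k w"
  using expectation_pmf_of_set_lessThan[OF assms, of "\<lambda>j. g k j w"] by (simp add: local_grad_def)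

lemma expectation_local_sgd_mean:
  fixes g :: "'k::finite \<Rightarrow> nat \<Rightarrow> 'p::euclidean_space \<Rightarrow> 'p"
  assumes n_pos: "\<forall>k. 0 < n k"
  shows "measure_pmf.expectation (device_samples n)
      (\<lambda>\<xi>. (norm (global_model P (local_sgd_update g \<eta> W \<xi>) - ws))\<^sup>2)
    = (norm (global_model P W - \<eta> *\<^sub>R (\<Sum>k\<in>UNIV. pmf P k *\<^sub>R local_grad n g k (W k)) - ws))\<^sup>2
      + \<eta>\<^sup>2 * (\<Sum>k\<in>UNIV. (pmf P k)\<^sup>2 * measure_pmf.expectation (pmf_of_set {..<n k})
           (\<lambda>j. (norm (g k j (W k) - local_grad n g k (W k)))\<^sup>2))"
proof -
  define a where "a = global_model P W - \<eta> *\<^sub>R (\<Sum>k\<in>UNIV. pmf P k *\<^sub>R local_grad n g k (W k)) - ws"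
  define Z where "Z = (\<lambda>k j. (- \<eta> * pmf P k) *\<^sub>R (g k j (W k) - local_grad n g k (W k)))"
  have fin: "finite (set_pmf (pmf_of_set {..<n k}))" for k
    using n_pos by (intro finite_set_pmf_of_set_lessThan) auto
  have centered: "measure_pmf.expectation (pmf_of_set {..<n k}) (Z k) = 0" for k
    unfolding Z_def using fin n_pos by (simp add: expectation_diff_finite expectation_sample_gradient)
  have "global_model P (local_sgd_update g \<eta> W \<xi>) - ws = a + (\<Sum>k\<in>UNIV. Z k (\<xi> k))" for \<xi>
    by (simp add: global_model_def local_sgd_update_def a_def Z_def scaleR_diff_right sum_subtractf
        scaleR_sum_right algebra_simps)
  then have "measure_pmf.expectation (device_samples n)
      (\<lambda>\<xi>. (norm (global_model P (local_sgd_update g \<eta> W \<xi>) - ws))\<^sup>2)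
      = (norm a)\<^sup>2 + (\<Sum>k\<in>UNIV. measure_pmf.expectation (pmf_of_set {..<n k}) (\<lambda>y. (norm (Z k y))\<^sup>2))"
    using fin centered by (simp add: expectation_Pi_pmf_norm_sq_sum_centered)
  moreover have "(norm (Z k y))\<^sup>2 = (\<eta>\<^sup>2 * (pmf P k)\<^sup>2) * (norm (g k y (W k) - local_grad n g k (W k)))\<^sup>2"
    for k y by (simp add: Z_def power_mult_distrib)
  ultimately show ?thesis by (simp add: a_def sum_distrib_left mult.assoc)
qed

lemma expectation_local_sgd_divergence:
  fixes g :: "'k::finite \<Rightarrow> nat \<Rightarrow> 'p::euclidean_space \<Rightarrow> 'p"
  assumes n_pos: "\<forall>k. 0 < n k" and "0 < s"
  shows "measure_pmf.expectation (device_samples n) (\<lambda>\<xi>. model_divergence P (local_sgd_update g \<eta> W \<xi>))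
    \<le> (1 + 1 / s) * model_divergence P W + (1 + s) * \<eta>\<^sup>2 * (\<Sum>k\<in>UNIV. pmf P k *
          measure_pmf.expectation (pmf_of_set {..<n k}) (\<lambda>j. (norm (g k j (W k)))\<^sup>2))"
proof -
  define c where "c = global_model P W"
  have fin: "finite (set_pmf (pmf_of_set {..<n k}))" for k
    using n_pos by (intro finite_set_pmf_of_set_lessThan) auto
  have "measure_pmf.expectation (device_samples n) (\<lambda>\<xi>. model_divergence P (local_sgd_update g \<eta> W \<xi>))
     \<le> measure_pmf.expectation (device_samples n)
          (\<lambda>\<xi>. \<Sum>k\<in>UNIV. pmf P k * (norm ((W k - c) - \<eta> *\<^sub>R g k (\<xi> k) (W k)))\<^sup>2)"
    using finite_set_device_samples[OF n_pos]
    by (intro expectation_mono_finite)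
       (auto intro: order_trans[OF model_divergence_le] simp: local_sgd_update_def algebra_simps)
  also have "\<dots> = (\<Sum>k\<in>UNIV. pmf P k * measure_pmf.expectation (pmf_of_set {..<n k})
        (\<lambda>j. (norm ((W k - c) - \<eta> *\<^sub>R g k j (W k)))\<^sup>2))"
    using expectation_device_samples_sum[OF n_pos,
        of "\<lambda>k j. pmf P k * (norm ((W k - c) - \<eta> *\<^sub>R g k j (W k)))\<^sup>2"] by simp
  also have "\<dots> \<le> (\<Sum>k\<in>UNIV. pmf P k * measure_pmf.expectation (pmf_of_set {..<n k})
        (\<lambda>j. (1 + 1 / s) * (norm (W k - c))\<^sup>2 + (1 + s) * \<eta>\<^sup>2 * (norm (g k j (W k)))\<^sup>2))"
  proof (intro sum_mono mult_left_mono expectation_mono_finite)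
    fix k j
    show "(norm ((W k - c) - \<eta> *\<^sub>R g k j (W k)))\<^sup>2
        \<le> (1 + 1 / s) * (norm (W k - c))\<^sup>2 + (1 + s) * \<eta>\<^sup>2 * (norm (g k j (W k)))\<^sup>2"
      using power2_norm_diff_le_weighted[OF \<open>0 < s\<close>, of "W k - c" "\<eta> *\<^sub>R g k j (W k)"]
      by (simp add: power_mult_distrib)
  qed (use fin in auto)
  also have "\<dots> = (1 + 1 / s) * model_divergence P W + (1 + s) * \<eta>\<^sup>2 * (\<Sum>k\<in>UNIV. pmf P k *
          measure_pmf.expectation (pmf_of_set {..<n k}) (\<lambda>j. (norm (g k j (W k)))\<^sup>2))"
    using fin by (simp add: expectation_add_finite model_divergence_def c_def distrib_left
        sum.distrib sum_distrib_left mult.left_commute)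
  finally show ?thesis .
qed

lemma expectation_local_sgd_divergence_consensus:
  fixes g :: "'k::finite \<Rightarrow> nat \<Rightarrow> 'p::euclidean_space \<Rightarrow> 'p"
  assumes n_pos: "\<forall>k. 0 < n k"
  shows "measure_pmf.expectation (device_samples n)
           (\<lambda>\<xi>. model_divergence P (local_sgd_update g \<eta> (\<lambda>_. w) \<xi>))
    \<le> \<eta>\<^sup>2 * (\<Sum>k\<in>UNIV. pmf P k *
          measure_pmf.expectation (pmf_of_set {..<n k}) (\<lambda>j. (norm (g k j w))\<^sup>2))"
proof -
  have "measure_pmf.expectation (device_samples n)
           (\<lambda>\<xi>. model_divergence P (local_sgd_update g \<eta> (\<lambda>_. w) \<xi>))
     \<le> measure_pmf.expectation (device_samples n) (\<lambda>\<xi>. \<Sum>k\<in>UNIV. pmf P k * (norm (\<eta> *\<^sub>R g k (\<xi> k) w))\<^sup>2)"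
    using finite_set_device_samples[OF n_pos]
    by (intro expectation_mono_finite)
       (auto intro: order_trans[OF model_divergence_le[where c = w]] simp: local_sgd_update_def)
  also have "\<dots> = \<eta>\<^sup>2 * (\<Sum>k\<in>UNIV. pmf P k *
          measure_pmf.expectation (pmf_of_set {..<n k}) (\<lambda>j. (norm (g k j w))\<^sup>2))"
    using expectation_device_samples_sum[OF n_pos, of "\<lambda>k j. pmf P k * (norm (\<eta> *\<^sub>R g k j w))\<^sup>2"]
    by (simp add: power_mult_distrib sum_distrib_left algebra_simps)
  finally show ?thesis .
qed

text \<open>Sampling the devices with replacement according to P makes the average unbiased.\<close>

lemma expectation_sampled_average:
  fixes V :: "'k::finite \<Rightarrow> 'p::euclidean_space"
  assumes "1 \<le> K"
  shows "measure_pmf.expectation (replicate_pmf K P) (\<lambda>S. (norm ((1 / real K) *\<^sub>R (\<Sum>j<K. V (S ! j)) - ws))\<^sup>2)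
    = (norm (global_model P V - ws))\<^sup>2 + model_divergence P V / real K"
proof -
  define m where "m = global_model P V"
  define Y where "Y = (\<lambda>k. (1 / real K) *\<^sub>R (V k - m))"
  have "measure_pmf.expectation P V = m"
    by (subst integral_measure_pmf[of UNIV]) (auto simp: m_def global_model_def)
  then have centered: "measure_pmf.expectation P Y = 0"
    unfolding Y_def by (simp add: expectation_diff_finite)
  have shift: "(1 / real K) *\<^sub>R (\<Sum>j<K. V (S ! j)) - ws = (m - ws) + (\<Sum>j<K. Y (S ! j))" for S
  proof -
    have "(\<Sum>j<K. Y (S ! j)) = (1 / real K) *\<^sub>R (\<Sum>j<K. V (S ! j)) - (1 / real K) *\<^sub>R (\<Sum>j<K. m)"
      by (simp add: Y_def scaleR_diff_right sum_subtractf scaleR_sum_right)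
    also have "(1 / real K) *\<^sub>R (\<Sum>j<K. m) = m" using assms by (simp add: sum_constant_scaleR)
    finally show ?thesis by simp
  qed
  have "measure_pmf.expectation (replicate_pmf K P)
      (\<lambda>S. (norm ((1 / real K) *\<^sub>R (\<Sum>j<K. V (S ! j)) - ws))\<^sup>2)
     = (norm (m - ws))\<^sup>2 + real K * measure_pmf.expectation P (\<lambda>y. (norm (Y y))\<^sup>2)"
    unfolding shift by (rule expectation_replicate_pmf_norm_sq_sum_centered[OF _ centered]) simp
  also have "measure_pmf.expectation P (\<lambda>y. (norm (Y y))\<^sup>2) = (\<Sum>k\<in>UNIV. pmf P k * (norm (Y k))\<^sup>2)"
    by (subst integral_measure_pmf[of UNIV]) auto
  also have "real K * \<dots> = model_divergence P V / real K"
  proof -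
    have "(norm (Y k))\<^sup>2 = (1 / real K)\<^sup>2 * (norm (V k - m))\<^sup>2" for k
      by (simp only: Y_def norm_scaleR power_mult_distrib power2_abs)
    then have "real K * (\<Sum>k\<in>UNIV. pmf P k * (norm (Y k))\<^sup>2) = real K * (1 / real K)\<^sup>2 * model_divergence P V"
      by (simp add: model_divergence_def m_def sum_distrib_left mult.left_commute mult.assoc)
    also have "real K * (1 / real K)\<^sup>2 = 1 / real K" using assms by (simp add: power2_eq_square)
    finally show ?thesis by simp
  qed
  finally show ?thesis by (simp add: m_def)
qed

lemma finite_set_fedavg_step:
  assumes "\<forall>k. 0 < n k"
  shows "finite (set_pmf (fedavg_step P n g eta E K t W))"
  unfolding fedavg_step_def Let_def
  using finite_set_device_samples[OF assms] finite_set_replicate_pmf[of P K]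
  by (intro finite_set_pmf_bind) (auto simp: set_bind_pmf)

lemma finite_set_fedavg_round:
  assumes "\<forall>k. 0 < n k"
  shows "finite (set_pmf (fedavg_round P n g eta E K w1 t))"
proof -
  have "finite (set_pmf (fedavg_aux P n g eta E K w1 m))" for m
    by (induction m) (auto simp: finite_set_fedavg_step[OF assms] intro!: finite_set_pmf_bind)
  thus ?thesis by (simp add: fedavg_round_def)
qed

lemma fedavg_round_Suc:
  "1 \<le> t \<Longrightarrow> fedavg_round P n g eta E K w1 (Suc t)
     = fedavg_round P n g eta E K w1 t \<bind> fedavg_step P n g eta E K t"
  by (cases t) (auto simp: fedavg_round_def)

lemma fedavg_step_synchronized:
  assumes "E dvd (t + 1)" "W' \<in> set_pmf (fedavg_step P n g eta E K t W)"
  shows "\<exists>c. W' = (\<lambda>_. c)"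
  using assms unfolding fedavg_step_def Let_def by (auto simp: set_bind_pmf)

lemma expectation_fedavg_step_dist_sq:
  fixes g :: "'k::finite \<Rightarrow> nat \<Rightarrow> 'p::euclidean_space \<Rightarrow> 'p"
  assumes n_pos: "\<forall>k. 0 < n k" and "1 \<le> K"
  shows "measure_pmf.expectation (fedavg_step P n g eta E K t W) (\<lambda>W'. (norm (global_model P W' - ws))\<^sup>2)
    = measure_pmf.expectation (device_samples n)
        (\<lambda>\<xi>. (norm (global_model P (local_sgd_update g (eta t) W \<xi>) - ws))\<^sup>2)
      + (if E dvd (t + 1) then measure_pmf.expectation (device_samples n)
           (\<lambda>\<xi>. model_divergence P (local_sgd_update g (eta t) W \<xi>)) / real K else 0)"
proof (cases "E dvd (t + 1)")
  case True
  have "measure_pmf.expectation (fedavg_step P n g eta E K t W) (\<lambda>W'. (norm (global_model P W' - ws))\<^sup>2)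
     = measure_pmf.expectation (device_samples n) (\<lambda>\<xi>. measure_pmf.expectation (replicate_pmf K P)
          (\<lambda>S. (norm ((1 / real K) *\<^sub>R (\<Sum>j<K. local_sgd_update g (eta t) W \<xi> (S ! j)) - ws))\<^sup>2))"
    unfolding fedavg_step_def Let_def
    using True finite_set_device_samples[OF n_pos] finite_set_replicate_pmf[of P K]
    by (subst expectation_bind_finite)
       (auto simp: expectation_bind_finite global_model_const local_sgd_update_def set_bind_pmf)
  also have "\<dots> = measure_pmf.expectation (device_samples n)
      (\<lambda>\<xi>. (norm (global_model P (local_sgd_update g (eta t) W \<xi>) - ws))\<^sup>2
           + model_divergence P (local_sgd_update g (eta t) W \<xi>) / real K)"
    using \<open>1 \<le> K\<close> by (simp add: expectation_sampled_average)
  finally show ?thesis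
    using True finite_set_device_samples[OF n_pos] by (simp add: expectation_add_finite)
next
  case False
  then show ?thesis
    unfolding fedavg_step_def Let_def using finite_set_device_samples[OF n_pos]
    by (subst expectation_bind_finite) (auto simp: local_sgd_update_def)
qed

lemma expectation_fedavg_step_divergence:
  fixes g :: "'k::finite \<Rightarrow> nat \<Rightarrow> 'p::euclidean_space \<Rightarrow> 'p"
  assumes n_pos: "\<forall>k. 0 < n k"
  shows "measure_pmf.expectation (fedavg_step P n g eta E K t W) (model_divergence P)
    = (if E dvd (t + 1) then 0
       else measure_pmf.expectation (device_samples n)
              (\<lambda>\<xi>. model_divergence P (local_sgd_update g (eta t) W \<xi>)))"
proof (cases "E dvd (t + 1)")
  case True
  then show ?thesis
    unfolding fedavg_step_def Let_def
    using finite_set_device_samples[OF n_pos] finite_set_replicate_pmf[of P K]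
    by (subst expectation_bind_finite) (auto simp: expectation_bind_finite model_divergence_const set_bind_pmf)
next
  case False
  then show ?thesis
    unfolding fedavg_step_def Let_def using finite_set_device_samples[OF n_pos]
    by (subst expectation_bind_finite) (auto simp: local_sgd_update_def)
qed

lemma no_multiple_between_imp_less:
  fixes E t0 t :: nat
  assumes "\<forall>u. t0 < u \<and> u \<le> t \<longrightarrow> \<not> E dvd u" "1 \<le> E"
  shows "t - t0 < E"
proof (rule ccontr)
  assume "\<not> t - t0 < E"
  then have "t0 + E \<le> t" using assms(2) by arith
  moreover have "t0 < E * (t0 div E) + E" "E * (t0 div E) + E \<le> t0 + E"
    using mult_div_mod_eq[of E t0] mod_less_divisor[of E t0] assms(2) by linarith+
  ultimately show False using assms(1) by (metis dvd_add_right_iff dvd_refl dvd_triv_left order_trans)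
qed

definition heterogeneity :: "'k::finite pmf \<Rightarrow> ('k \<Rightarrow> nat) \<Rightarrow> ('k \<Rightarrow> nat \<Rightarrow> 'p \<Rightarrow> real) \<Rightarrow> 'p \<Rightarrow> real" where
  "heterogeneity P n f w = global_loss P n f w - (\<Sum>k\<in>UNIV. pmf P k * Inf (range (local_loss n f k)))"

locale fedavg_convergence =
  fixes P :: "'k::finite pmf" and n :: "'k \<Rightarrow> nat"
    and f :: "'k \<Rightarrow> nat \<Rightarrow> 'p::euclidean_space \<Rightarrow> real" and g :: "'k \<Rightarrow> nat \<Rightarrow> 'p \<Rightarrow> 'p"
    and E K :: nat and L \<mu> G :: real and \<sigma> :: "'k \<Rightarrow> real" and w1 wstar :: 'p
    and eta :: "nat \<Rightarrow> real"
  assumes n_pos: "\<forall>k. 0 < n k"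
    and sgrad: "\<forall>k j w. j < n k \<longrightarrow> GDERIV (f k j) w :> g k j w"
    and E_ge: "1 \<le> E" and K_ge: "1 \<le> K"
    and smooth: "\<forall>k. L_smooth L (local_loss n f k)"
    and mu_pos: "0 < \<mu>"
    and strongly_convex: "\<forall>k. strongly_convex \<mu> (local_loss n f k)"
    and variance: "\<forall>k s. 1 \<le> s \<longrightarrow>
       measure_pmf.expectation (fedavg_round P n g eta E K w1 s)
         (\<lambda>W. measure_pmf.expectation (pmf_of_set {..<n k})
            (\<lambda>j. (norm (g k j (W k) - local_grad n g k (W k)))\<^sup>2)) \<le> (\<sigma> k)\<^sup>2"
    and second_moment: "\<forall>k s. 1 \<le> s \<longrightarrow>
       measure_pmf.expectation (fedavg_round P n g eta E K w1 s)
         (\<lambda>W. measure_pmf.expectation (pmf_of_set {..<n k})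
            (\<lambda>j. (norm (g k j (W k)))\<^sup>2)) \<le> G\<^sup>2"
    and wstar_min: "\<forall>w. global_loss P n f wstar \<le> global_loss P n f w"
    and eta_pos: "\<And>s. 0 < eta s"
    and eta_antimono: "\<And>s t. s \<le> t \<Longrightarrow> eta t \<le> eta s"
    and eta_small: "\<And>s. 4 * L * eta s \<le> 1"
    and eta_window: "\<And>s t. s \<le> t \<Longrightarrow> t < s + E \<Longrightarrow> eta s \<le> 2 * eta t"
begin

abbreviation models :: "nat \<Rightarrow> ('k \<Rightarrow> 'p) pmf" where
  "models \<equiv> fedavg_round P n g eta E K w1"

definition mean_sq_dist :: "nat \<Rightarrow> real" where
  "mean_sq_dist t = measure_pmf.expectation (models t) (\<lambda>W. (norm (global_model P W - wstar))\<^sup>2)"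

lemma finite_set_models: "finite (set_pmf (models t))"
  using n_pos by (rule finite_set_fedavg_round)

lemma local_gderiv: "GDERIV (local_loss n f k) w :> local_grad n g k w"
  using sgrad by (rule gderiv_local_loss)

lemma local_grad_lipschitz: "norm (local_grad n g k v - local_grad n g k w) \<le> L * norm (v - w)"
  using smooth local_gderiv by (intro L_smooth_gradient_lipschitz) auto

lemma local_first_order:
  "local_loss n f k x + inner (local_grad n g k x) (y - x) + \<mu> / 2 * (norm (y - x))\<^sup>2
     \<le> local_loss n f k y"
  using strongly_convex local_gderiv by (intro strongly_convex_first_order) auto

lemma L_pos: "0 < L"
  using strongly_convex_le_lipschitz_gradient[OF local_gderiv local_grad_lipschitz] strongly_convex
    mu_pos by fastforce

lemma local_grad_power2_le:
  "(norm (local_grad n g k x))\<^sup>2 \<le> 2 * L * (local_loss n f k x - Inf (range (local_loss n f k)))"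
  using strongly_convex mu_pos
  by (intro power2_norm_gradient_le_suboptimality[OF local_gderiv local_grad_lipschitz]) auto

lemma Inf_local_loss_le: "Inf (range (local_loss n f k)) \<le> local_loss n f k w"
proof -
  have "bdd_below (range (local_loss n f k))"
    using strongly_convex mu_pos by (intro strongly_convex_bdd_below[OF local_gderiv]) auto
  then show ?thesis by (simp add: cInf_lower)
qed

lemma heterogeneity_nonneg: "0 \<le> heterogeneity P n f wstar"
proof -
  have "(\<Sum>k\<in>UNIV. pmf P k * Inf (range (local_loss n f k))) \<le> global_loss P n f wstar"
    unfolding global_loss_def using Inf_local_loss_le by (intro sum_mono mult_left_mono) auto
  then show ?thesis by (simp add: heterogeneity_def)
qed

lemma weighted_second_moment:
  assumes "1 \<le> s"
  shows "measure_pmf.expectation (models s) (\<lambda>W. \<Sum>k\<in>UNIV. pmf P k *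
           measure_pmf.expectation (pmf_of_set {..<n k}) (\<lambda>j. (norm (g k j (W k)))\<^sup>2)) \<le> G\<^sup>2"
proof -
  have "measure_pmf.expectation (models s) (\<lambda>W. \<Sum>k\<in>UNIV. pmf P k *
           measure_pmf.expectation (pmf_of_set {..<n k}) (\<lambda>j. (norm (g k j (W k)))\<^sup>2))
      = (\<Sum>k\<in>UNIV. pmf P k * measure_pmf.expectation (models s) (\<lambda>W.
           measure_pmf.expectation (pmf_of_set {..<n k}) (\<lambda>j. (norm (g k j (W k)))\<^sup>2)))"
    using finite_set_models by (simp add: expectation_sum_finite)
  also have "\<dots> \<le> (\<Sum>k\<in>UNIV. pmf P k * G\<^sup>2)"
    using second_moment assms by (intro sum_mono mult_left_mono) auto
  also have "\<dots> = G\<^sup>2" by (simp add: sum_distrib_right[symmetric] sum_pmf_UNIV)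
  finally show ?thesis .
qed


lemma expected_step_divergence_bound:
  assumes "1 \<le> t" "t0 \<le> t"
    and consensus: "t0 = t \<Longrightarrow> \<forall>W\<in>set_pmf (models t). \<exists>c. W = (\<lambda>_. c)"
    and divergence: "measure_pmf.expectation (models t) (model_divergence P)
                       \<le> (real (t - t0))\<^sup>2 * (eta t0)\<^sup>2 * G\<^sup>2"
  shows "measure_pmf.expectation (models t) (\<lambda>W. measure_pmf.expectation (device_samples n)
           (\<lambda>\<xi>. model_divergence P (local_sgd_update g (eta t) W \<xi>)))
         \<le> (real (t - t0) + 1)\<^sup>2 * (eta t0)\<^sup>2 * G\<^sup>2"
proof -
  define M where "M = (\<lambda>W. \<Sum>k\<in>UNIV. pmf P k *
     measure_pmf.expectation (pmf_of_set {..<n k}) (\<lambda>j. (norm (g k j (W k)))\<^sup>2))"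
  have M: "measure_pmf.expectation (models t) M \<le> G\<^sup>2"
    unfolding M_def using \<open>1 \<le> t\<close> by (rule weighted_second_moment)
  have eta: "(eta t)\<^sup>2 \<le> (eta t0)\<^sup>2"
    using eta_pos eta_antimono[OF \<open>t0 \<le> t\<close>] by (simp add: less_imp_le power_mono)
  show ?thesis
  proof (cases "t0 = t")
    case True
    have "measure_pmf.expectation (models t) (\<lambda>W. measure_pmf.expectation (device_samples n)
           (\<lambda>\<xi>. model_divergence P (local_sgd_update g (eta t) W \<xi>)))
        \<le> measure_pmf.expectation (models t) (\<lambda>W. (eta t)\<^sup>2 * M W)"
    proof (intro expectation_mono_finite[OF finite_set_models])
      fix W assume "W \<in> set_pmf (models t)"
      then obtain c where "W = (\<lambda>_. c)" using consensus[OF True] by blast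
      then show "measure_pmf.expectation (device_samples n)
          (\<lambda>\<xi>. model_divergence P (local_sgd_update g (eta t) W \<xi>)) \<le> (eta t)\<^sup>2 * M W"
        using expectation_local_sgd_divergence_consensus[OF n_pos, of P g "eta t" c]
        by (simp add: M_def)
    qed
    also have "\<dots> \<le> (eta t)\<^sup>2 * G\<^sup>2" using M by (simp add: mult_left_mono)
    finally show ?thesis using True by simp
  next
    case False
    define s where "s = real (t - t0)"
    have "0 < s" using False \<open>t0 \<le> t\<close> by (simp add: s_def)
    have "measure_pmf.expectation (models t) (\<lambda>W. measure_pmf.expectation (device_samples n)
           (\<lambda>\<xi>. model_divergence P (local_sgd_update g (eta t) W \<xi>)))
        \<le> measure_pmf.expectation (models t)
            (\<lambda>W. (1 + 1 / s) * model_divergence P W + (1 + s) * (eta t)\<^sup>2 * M W)"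
      using expectation_local_sgd_divergence[OF n_pos \<open>0 < s\<close>]
      by (intro expectation_mono_finite[OF finite_set_models]) (simp add: M_def)
    also have "\<dots> = (1 + 1 / s) * measure_pmf.expectation (models t) (model_divergence P)
        + (1 + s) * (eta t)\<^sup>2 * measure_pmf.expectation (models t) M"
      using finite_set_models by (simp add: expectation_add_finite)
    also have "\<dots> \<le> (1 + 1 / s) * (s\<^sup>2 * (eta t0)\<^sup>2 * G\<^sup>2) + (1 + s) * (eta t0)\<^sup>2 * G\<^sup>2"
      using divergence M eta \<open>0 < s\<close>
      by (intro add_mono mult_left_mono order_trans[OF mult_left_mono mult_right_mono])
         (auto simp: s_def)
    also have "\<dots> = (s + 1)\<^sup>2 * (eta t0)\<^sup>2 * G\<^sup>2"
      using \<open>0 < s\<close> by (simp add: field_simps power2_eq_square)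
    finally show ?thesis by (simp add: s_def)
  qed
qed

text \<open>The local models drift apart only since the last synchronisation round t0, when the
  server broadcast a common model.\<close>

lemma divergence_since_synchronization:
  assumes "1 \<le> t"
  shows "\<exists>t0. t0 \<le> t \<and> (\<forall>u. t0 < u \<and> u \<le> t \<longrightarrow> \<not> E dvd u)
     \<and> (t0 = t \<longrightarrow> (\<forall>W\<in>set_pmf (models t). \<exists>c. W = (\<lambda>_. c)))
     \<and> measure_pmf.expectation (models t) (model_divergence P) \<le> (real (t - t0))\<^sup>2 * (eta t0)\<^sup>2 * G\<^sup>2"
  using assms
proof (induction t rule: dec_induct)
  case base
  show ?case by (intro exI[of _ 1]) (auto simp: fedavg_round_def model_divergence_const)
next
  case (step t)
  then obtain t0 where t0: "t0 \<le> t" "\<forall>u. t0 < u \<and> u \<le> t \<longrightarrow> \<not> E dvd u"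
     "t0 = t \<longrightarrow> (\<forall>W\<in>set_pmf (models t). \<exists>c. W = (\<lambda>_. c))"
     "measure_pmf.expectation (models t) (model_divergence P) \<le> (real (t - t0))\<^sup>2 * (eta t0)\<^sup>2 * G\<^sup>2"
    by blast
  have models_Suc: "models (Suc t) = models t \<bind> fedavg_step P n g eta E K t"
    using step by (simp add: fedavg_round_Suc)
  have divergence_Suc: "measure_pmf.expectation (models (Suc t)) (model_divergence P)
     = measure_pmf.expectation (models t) (\<lambda>W. if E dvd (t + 1) then 0
         else measure_pmf.expectation (device_samples n)
                (\<lambda>\<xi>. model_divergence P (local_sgd_update g (eta t) W \<xi>)))"
    unfolding models_Suc using finite_set_models finite_set_fedavg_step[OF n_pos]
    by (subst expectation_bind_finite) (auto simp: expectation_fedavg_step_divergence[OF n_pos])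
  show ?case
  proof (cases "E dvd (t + 1)")
    case True
    then show ?thesis
      using divergence_Suc fedavg_step_synchronized
      by (intro exI[of _ "Suc t"]) (auto simp: models_Suc set_bind_pmf)
  next
    case False
    have "measure_pmf.expectation (models t) (\<lambda>W. measure_pmf.expectation (device_samples n)
           (\<lambda>\<xi>. model_divergence P (local_sgd_update g (eta t) W \<xi>)))
        \<le> (real (t - t0) + 1)\<^sup>2 * (eta t0)\<^sup>2 * G\<^sup>2"
      using step t0 by (intro expected_step_divergence_bound) auto
    then show ?thesis
      using False t0 divergence_Suc
      by (intro exI[of _ t0]) (auto simp: Suc_diff_le add.commute le_Suc_eq)
  qed
qed

lemma expected_divergences_le:
  assumes "1 \<le> t"
  shows "measure_pmf.expectation (models t) (model_divergence P)
           \<le> 4 * (real E - 1)\<^sup>2 * (eta t)\<^sup>2 * G\<^sup>2"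
    and "measure_pmf.expectation (models t) (\<lambda>W. measure_pmf.expectation (device_samples n)
           (\<lambda>\<xi>. model_divergence P (local_sgd_update g (eta t) W \<xi>)))
         \<le> 4 * (real E)\<^sup>2 * (eta t)\<^sup>2 * G\<^sup>2"
proof -
  obtain t0 where t0: "t0 \<le> t" "\<forall>u. t0 < u \<and> u \<le> t \<longrightarrow> \<not> E dvd u"
     "t0 = t \<longrightarrow> (\<forall>W\<in>set_pmf (models t). \<exists>c. W = (\<lambda>_. c))"
     and divergence: "measure_pmf.expectation (models t) (model_divergence P)
                        \<le> (real (t - t0))\<^sup>2 * (eta t0)\<^sup>2 * G\<^sup>2"
    using divergence_since_synchronization[OF assms] by blast
  have "t - t0 < E" using t0(2) E_ge by (rule no_multiple_between_imp_less)
  then have gap: "real (t - t0) \<le> real E - 1" "real (t - t0) + 1 \<le> real E" by linarith+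
  have "eta t0 \<le> 2 * eta t"
    using \<open>t - t0 < E\<close> t0(1) by (intro eta_window) auto
  then have eta: "(eta t0)\<^sup>2 \<le> 4 * (eta t)\<^sup>2"
    using power_mono[of "eta t0" "2 * eta t" 2] eta_pos[of t0] by (simp add: power_mult_distrib)
  have "(real (t - t0))\<^sup>2 * (eta t0)\<^sup>2 \<le> (real E - 1)\<^sup>2 * (4 * (eta t)\<^sup>2)"
    and "(real (t - t0) + 1)\<^sup>2 * (eta t0)\<^sup>2 \<le> (real E)\<^sup>2 * (4 * (eta t)\<^sup>2)"
    using gap eta by (auto intro!: mult_mono power_mono)
  from this[THEN mult_right_mono, of "G\<^sup>2"]
  have "(real (t - t0))\<^sup>2 * (eta t0)\<^sup>2 * G\<^sup>2 \<le> 4 * (real E - 1)\<^sup>2 * (eta t)\<^sup>2 * G\<^sup>2"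
    and "(real (t - t0) + 1)\<^sup>2 * (eta t0)\<^sup>2 * G\<^sup>2 \<le> 4 * (real E)\<^sup>2 * (eta t)\<^sup>2 * G\<^sup>2"
    by (simp_all add: mult_ac)
  moreover have "measure_pmf.expectation (models t) (\<lambda>W. measure_pmf.expectation (device_samples n)
           (\<lambda>\<xi>. model_divergence P (local_sgd_update g (eta t) W \<xi>)))
         \<le> (real (t - t0) + 1)\<^sup>2 * (eta t0)\<^sup>2 * G\<^sup>2"
    using assms t0 divergence by (intro expected_step_divergence_bound) auto
  ultimately show "measure_pmf.expectation (models t) (model_divergence P)
           \<le> 4 * (real E - 1)\<^sup>2 * (eta t)\<^sup>2 * G\<^sup>2"
    and "measure_pmf.expectation (models t) (\<lambda>W. measure_pmf.expectation (device_samples n)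
           (\<lambda>\<xi>. model_divergence P (local_sgd_update g (eta t) W \<xi>)))
         \<le> 4 * (real E)\<^sup>2 * (eta t)\<^sup>2 * G\<^sup>2"
    using divergence by linarith+
qed


lemma fedavg_step_dist_sq_le:
  "measure_pmf.expectation (fedavg_step P n g eta E K t W) (\<lambda>W'. (norm (global_model P W' - wstar))\<^sup>2)
   \<le> (1 - \<mu> * eta t) * (norm (global_model P W - wstar))\<^sup>2
     + 6 * L * (eta t)\<^sup>2 * heterogeneity P n f wstar + 2 * model_divergence P W
     + (eta t)\<^sup>2 * (\<Sum>k\<in>UNIV. (pmf P k)\<^sup>2 * measure_pmf.expectation (pmf_of_set {..<n k})
           (\<lambda>j. (norm (g k j (W k) - local_grad n g k (W k)))\<^sup>2))
     + (if E dvd (t + 1) then measure_pmf.expectation (device_samples n)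
          (\<lambda>\<xi>. model_divergence P (local_sgd_update g (eta t) W \<xi>)) / real K else 0)"
proof -
  have opt: "(\<Sum>k\<in>UNIV. pmf P k * local_loss n f k wstar) \<le> (\<Sum>k\<in>UNIV. pmf P k * local_loss n f k w)"
    for w using wstar_min by (simp add: global_loss_def)
  have "(\<Sum>k\<in>UNIV. pmf P k * Inf (range (local_loss n f k))) \<le> (\<Sum>k\<in>UNIV. pmf P k * local_loss n f k wstar)"
    using Inf_local_loss_le by (intro sum_mono mult_left_mono) auto
  from averaged_gradient_step_contraction[OF pmf_nonneg sum_pmf_UNIV local_first_order
      local_grad_power2_le opt this, where W = W] mu_pos L_pos eta_pos[of t] eta_small[of t]
  have "(norm (global_model P W - eta t *\<^sub>R (\<Sum>k\<in>UNIV. pmf P k *\<^sub>R local_grad n g k (W k)) - wstar))\<^sup>2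
      \<le> (1 - \<mu> * eta t) * (norm (global_model P W - wstar))\<^sup>2
        + 6 * L * (eta t)\<^sup>2 * heterogeneity P n f wstar + 2 * model_divergence P W"
    by (simp add: global_model_def heterogeneity_def global_loss_def model_divergence_def)
  then show ?thesis
    by (simp add: expectation_fedavg_step_dist_sq[OF n_pos K_ge] expectation_local_sgd_mean[OF n_pos])
qed

lemma mean_sq_dist_Suc_le:
  assumes "1 \<le> t"
  shows "mean_sq_dist (Suc t) \<le> (1 - \<mu> * eta t) * mean_sq_dist t + (eta t)\<^sup>2 *
           ((\<Sum>k\<in>UNIV. (pmf P k)\<^sup>2 * (\<sigma> k)\<^sup>2) + 6 * L * heterogeneity P n f wstar
            + 8 * (real E - 1)\<^sup>2 * G\<^sup>2 + 4 / real K * (real E)\<^sup>2 * G\<^sup>2)"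
proof -
  define V where "V = (\<lambda>W. \<Sum>k\<in>UNIV. (pmf P k)\<^sup>2 * measure_pmf.expectation (pmf_of_set {..<n k})
           (\<lambda>j. (norm (g k j (W k) - local_grad n g k (W k)))\<^sup>2))"
  define D where "D = (\<lambda>W. measure_pmf.expectation (device_samples n)
          (\<lambda>\<xi>. model_divergence P (local_sgd_update g (eta t) W \<xi>)))"
  have "mean_sq_dist (Suc t) = measure_pmf.expectation (models t) (\<lambda>W.
      measure_pmf.expectation (fedavg_step P n g eta E K t W) (\<lambda>W'. (norm (global_model P W' - wstar))\<^sup>2))"
    unfolding mean_sq_dist_def fedavg_round_Suc[OF assms]
    using finite_set_models finite_set_fedavg_step[OF n_pos] by (subst expectation_bind_finite) auto
  also have "\<dots> \<le> measure_pmf.expectation (models t) (\<lambda>W.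
      (1 - \<mu> * eta t) * (norm (global_model P W - wstar))\<^sup>2
      + 6 * L * (eta t)\<^sup>2 * heterogeneity P n f wstar + 2 * model_divergence P W
      + (eta t)\<^sup>2 * V W + (if E dvd (t + 1) then D W / real K else 0))"
    unfolding V_def D_def
    by (intro expectation_mono_finite[OF finite_set_models] fedavg_step_dist_sq_le)
  also have "\<dots> = (1 - \<mu> * eta t) * mean_sq_dist t + 6 * L * (eta t)\<^sup>2 * heterogeneity P n f wstar
      + 2 * measure_pmf.expectation (models t) (model_divergence P)
      + (eta t)\<^sup>2 * measure_pmf.expectation (models t) V
      + (if E dvd (t + 1) then measure_pmf.expectation (models t) D / real K else 0)"
    unfolding mean_sq_dist_def using finite_set_models
    by (cases "E dvd (t + 1)") (simp_all add: expectation_add_finite)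
  also have "\<dots> \<le> (1 - \<mu> * eta t) * mean_sq_dist t + 6 * L * (eta t)\<^sup>2 * heterogeneity P n f wstar
      + (eta t)\<^sup>2 * (8 * (real E - 1)\<^sup>2 * G\<^sup>2)
      + (eta t)\<^sup>2 * (\<Sum>k\<in>UNIV. (pmf P k)\<^sup>2 * (\<sigma> k)\<^sup>2)
      + (eta t)\<^sup>2 * (4 / real K * (real E)\<^sup>2 * G\<^sup>2)"
  proof (intro add_mono order_refl)
    show "2 * measure_pmf.expectation (models t) (model_divergence P) \<le> (eta t)\<^sup>2 * (8 * (real E - 1)\<^sup>2 * G\<^sup>2)"
      using expected_divergences_le(1)[OF assms] by (simp add: mult_ac)
    have "measure_pmf.expectation (models t) V = (\<Sum>k\<in>UNIV. (pmf P k)\<^sup>2 *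
        measure_pmf.expectation (models t) (\<lambda>W. measure_pmf.expectation (pmf_of_set {..<n k})
          (\<lambda>j. (norm (g k j (W k) - local_grad n g k (W k)))\<^sup>2)))"
      unfolding V_def using finite_set_models by (simp add: expectation_sum_finite)
    also have "\<dots> \<le> (\<Sum>k\<in>UNIV. (pmf P k)\<^sup>2 * (\<sigma> k)\<^sup>2)"
      using variance assms by (intro sum_mono mult_left_mono) auto
    finally show "(eta t)\<^sup>2 * measure_pmf.expectation (models t) V
        \<le> (eta t)\<^sup>2 * (\<Sum>k\<in>UNIV. (pmf P k)\<^sup>2 * (\<sigma> k)\<^sup>2)" by (simp add: mult_left_mono)
    have "measure_pmf.expectation (models t) D / real K \<le> 4 * (real E)\<^sup>2 * (eta t)\<^sup>2 * G\<^sup>2 / real K"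
      using expected_divergences_le(2)[OF assms] K_ge unfolding D_def by (simp add: divide_right_mono)
    then show "(if E dvd (t + 1) then measure_pmf.expectation (models t) D / real K else 0)
        \<le> (eta t)\<^sup>2 * (4 / real K * (real E)\<^sup>2 * G\<^sup>2)" by (simp add: mult_ac)
  qed
  finally show ?thesis by (simp add: algebra_simps)
qed

end

theorem theorem2:
  fixes P :: "'k::finite pmf"
    and n :: "'k \<Rightarrow> nat"
    and f :: "'k \<Rightarrow> nat \<Rightarrow> 'p::euclidean_space \<Rightarrow> real"
    and g :: "'k \<Rightarrow> nat \<Rightarrow> 'p \<Rightarrow> 'p"
    and E K :: nat
    and L \<mu> G LR :: real
    and \<sigma> :: "'k \<Rightarrow> real"
    and w1 wstar :: 'p
    and x :: "real ^ 'd"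
    and R :: "'r \<Rightarrow> 'p \<Rightarrow> real ^ 'd"
    and Q :: "'r measure"
    and t :: nat
    and \<gamma> :: real and eta :: "nat \<Rightarrow> real" and \<Gamma> B C :: real
  defines \<gamma>_def: "\<gamma> \<equiv> max (8 * L / \<mu>) (real E)"
    and eta_def: "eta \<equiv> (\<lambda>s. 2 / (\<mu> * (\<gamma> + real s)))"
    and \<Gamma>_def: "\<Gamma> \<equiv> global_loss P n f wstar - (\<Sum>k\<in>UNIV. pmf P k * Inf (range (local_loss n f k)))"
    and B_def: "B \<equiv> (\<Sum>k\<in>UNIV. (pmf P k)\<^sup>2 * (\<sigma> k)\<^sup>2) + 6 * L * \<Gamma> + 8 * (real E - 1)\<^sup>2 * G\<^sup>2"
    and C_def: "C \<equiv> 4 / real K * (real E)\<^sup>2 * G\<^sup>2"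
  assumes n_pos: "\<forall>k. 0 < n k"
    and sgrad: "\<forall>k j w. j < n k \<longrightarrow> GDERIV (f k j) w :> g k j w"
    and E_ge: "1 \<le> E"
    and K_ge: "1 \<le> K" and K_le: "K \<le> CARD('k)"
    and A1: "\<forall>k. L_smooth L (local_loss n f k)"
    and mu_pos: "0 < \<mu>"
    and A2: "\<forall>k. strongly_convex \<mu> (local_loss n f k)"
    and A3: "\<forall>k s. 1 \<le> s \<longrightarrow>
       measure_pmf.expectation (fedavg_round P n g eta E K w1 s)
         (\<lambda>W. measure_pmf.expectation (pmf_of_set {..<n k})
            (\<lambda>j. (norm (g k j (W k) - local_grad n g k (W k)))\<^sup>2)) \<le> (\<sigma> k)\<^sup>2"
    and A4: "\<forall>k s. 1 \<le> s \<longrightarrow>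
       measure_pmf.expectation (fedavg_round P n g eta E K w1 s)
         (\<lambda>W. measure_pmf.expectation (pmf_of_set {..<n k})
            (\<lambda>j. (norm (g k j (W k)))\<^sup>2)) \<le> G\<^sup>2"
    and wstar_min: "\<forall>w. global_loss P n f wstar \<le> global_loss P n f w"
    and x_box: "\<forall>i. 0 \<le> x $ i \<and> x $ i \<le> 1"
    and Q_prob: "prob_space Q"
    and R_meas: "\<forall>w. (\<lambda>r. R r w) \<in> borel_measurable Q"
    and R_lip: "\<forall>r. LR-lipschitz_on UNIV (R r)"
    and t_ge: "1 \<le> t"
  shows "(\<integral>\<^sup>+ W. (\<integral>\<^sup>+ r. ennreal ((norm (x - R r (global_model P W)))\<^sup>2) \<partial>Q)
            \<partial>measure_pmf (fedavg_round P n g eta E K w1 t))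
         \<le> 2 * (\<integral>\<^sup>+ r. ennreal ((norm (x - R r wstar))\<^sup>2) \<partial>Q)
           + ennreal (2 * LR\<^sup>2 / (\<gamma> + real t)
                * (4 * (B + C) / \<mu>\<^sup>2 + (\<gamma> + 1) * (norm (w1 - wstar))\<^sup>2))"
proof -
  have \<gamma>: "1 \<le> \<gamma>" "8 * L / \<mu> \<le> \<gamma>" "real E \<le> \<gamma>" using E_ge by (auto simp: \<gamma>_def)
  interpret fedavg_convergence P n f g E K L \<mu> G \<sigma> w1 wstar eta
    using n_pos sgrad E_ge K_ge A1 mu_pos A2 A3 A4 wstar_min
      inverse_linear_stepsize[OF mu_pos \<gamma>] unfolding eta_def by unfold_locales auto
  define v where "v = 4 * (B + C) / \<mu>\<^sup>2 + (\<gamma> + 1) * (norm (w1 - wstar))\<^sup>2"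
  have "0 \<le> 4 * (B + C) / \<mu>\<^sup>2"
    using heterogeneity_nonneg L_pos by (simp add: B_def C_def \<Gamma>_def heterogeneity_def sum_nonneg)
  then have "0 \<le> v" "mean_sq_dist 1 \<le> v / (\<gamma> + 1)"
    using \<gamma>(1) by (simp_all add: v_def mean_sq_dist_def fedavg_round_def global_model_const
        le_divide_eq algebra_simps)
  moreover have "mean_sq_dist (Suc s) \<le> (1 - \<mu> * eta s) * mean_sq_dist s + (eta s)\<^sup>2 * (B + C)"
    if "1 \<le> s" for s
    using mean_sq_dist_Suc_le[OF that] by (simp add: B_def C_def \<Gamma>_def heterogeneity_def)
  ultimately have "mean_sq_dist t \<le> v / (\<gamma> + real t)"
    using \<gamma>(1) mu_pos t_ge
    by (intro recursion_bound_inverse_linear[where \<beta> = "B + C"]) (auto simp: eta_def v_def)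
  have "(\<integral>\<^sup>+ W. (\<integral>\<^sup>+ r. ennreal ((norm (x - R r (global_model P W)))\<^sup>2) \<partial>Q) \<partial>measure_pmf (models t))
      \<le> 2 * (\<integral>\<^sup>+ r. ennreal ((norm (x - R r wstar))\<^sup>2) \<partial>Q) + ennreal (2 * LR\<^sup>2 * mean_sq_dist t)"
    unfolding mean_sq_dist_def
    by (rule nn_integral_lipschitz_reconstruction_le[OF Q_prob finite_set_models R_meas[rule_format] R_lip])
  also have "\<dots> \<le> 2 * (\<integral>\<^sup>+ r. ennreal ((norm (x - R r wstar))\<^sup>2) \<partial>Q) + ennreal (2 * LR\<^sup>2 * (v / (\<gamma> + real t)))"
    using \<open>mean_sq_dist t \<le> v / (\<gamma> + real t)\<close> by (intro add_left_mono ennreal_leI mult_left_mono) auto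
  finally show ?thesis by (simp add: v_def)
qed

end
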